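(* In the setting of the context, let $K=(K_c,K_h)$ and $r$ be formal power series as produced in the setting (so $K_c(x,y)=(x,y)+$ terms of order $\ge2$, $K_h$ has only terms of order $\ge2$, and $DK\,r=F\circ K$ formally). Let $\mathcal E(\mathbf x)=E(\mathcal C\mathbf x+L_c)$ and $\mathcal E_0=\mathcal E(0)=E(L_c)$. If the constant $$\mathscr E=\Omega_{xxx}\Omega_{yy}^3-3\Omega_{xxy}\Omega_{yy}^2\Omega_{xy}+3\Omega_{xyy}\Omega_{yy}\Omega_{xy}^2-\Omega_{yyy}\Omega_{xy}^3$$ is non-zero, then there exists a formal power series $h:\mathbb R\to\mathbb R^2$ of the form $$h(t)=\Big(\sum_{n\ge2}c_nt^n,\;t^3\Big)$$ such that $\mathcal E(K(h(t)))-\mathcal E_0=0$ as a formal power series in $t$.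
   Context: Circular restricted four body problem (CRFBP): masses $m_1+m_2+m_3=1$, $0<m_3\le m_2\le m_1$, primaries at fixed positions $(x_j,y_j)$, $j=1,2,3$, $r_j(x,y)=\sqrt{(x-x_j)^2+(y-y_j)^2}$, $\Omega(x,y)=\tfrac12(x^2+y^2)+\sum_j m_j/r_j$, vector field $f(x,\dot x,y,\dot y)=(\dot x,\,2\dot y+\Omega_x,\,\dot y,\,-2\dot x+\Omega_y)$, and Jacobi integral $E(x,\dot x,y,\dot y)=-(\dot x^2+\dot y^2)+2\Omega(x,y)$, which is conserved by $f$. Let $L_c=(x_0,0,y_0,0)$ be a critical libration point: $\Omega_x=\Omega_y=0$ and $\Omega_{xx}\Omega_{yy}=\Omega_{xy}^2$ at $(x_0,y_0)$; as in the paper's setting assume also $\Omega_{yy}\ne0$ and $\Omega_{xx}+\Omega_{yy}>4$ (all derivatives of $\Omega$ evaluated at $(x_0,y_0)$). Set $\lambda_\pm=\mp\sqrt{-4+\Omega_{xx}+\Omega_{yy}}$, $\mathbf v_0=(\Omega_{yy},0,-\Omega_{xy},0)$, $\mathbf v_1=(\Omega_{xy},\Omega_{yy},2-\Omega_{xx},-\Omega_{xy})$, $\mathbf v_\pm=(\Omega_{xy}+2\lambda_\pm,\lambda_\pm(\Omega_{xy}+2\lambda_\pm),\Omega_{yy}-4,\lambda_\pm(\Omega_{yy}-4))$, $\mathcal C$ the matrix with columns $\mathbf v_0,\mathbf v_1,\mathbf v_+,\mathbf v_-$, and $F(\mathbf x)=\mathcal C^{-1}f(\mathcal C\mathbf x+L_c)$.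 The formal series $K:\mathbb R^2\to\mathbb R^4$, $r:\mathbb R^2\to\mathbb R^2$ satisfy $DK(\mathbf y)r(\mathbf y)=F(K(\mathbf y))$ order by order, with $r(x,y)=(y,0)+$ terms of order $\ge2$. All compositions are of formal power series (with $\mathcal E$ replaced by its Taylor series at $0$). *)

theory Defs
  imports "HOL-Analysis.Analysis" "HOL-Computational_Algebra.Formal_Power_Series"
begin

text \<open>Effective potential of the CRFBP. Primaries indexed by j in {1,2,3}:
  masses m j, positions (px j, py j).\<close>
definition Omega :: "(nat \<Rightarrow> real) \<Rightarrow> (nat \<Rightarrow> real) \<Rightarrow> (nat \<Rightarrow> real) \<Rightarrow> real \<Rightarrow> real \<Rightarrow> real" where
  "Omega m px py x y = (x\<^sup>2 + y\<^sup>2) / 2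
     + (\<Sum>j\<in>{1,2,3::nat}. m j / sqrt ((x - px j)\<^sup>2 + (y - py j)\<^sup>2))"

definition pd :: "nat \<Rightarrow> nat \<Rightarrow> (real \<Rightarrow> real \<Rightarrow> real) \<Rightarrow> real \<Rightarrow> real \<Rightarrow> real" where
  "pd i j g a b = (deriv ^^ i) (\<lambda>x. (deriv ^^ j) (\<lambda>y. g x y) b) a"

text \<open>Vector field f(x, xdot, y, ydot) and Jacobi integral E; coordinates ordered
  (x, xdot, y, ydot) as components 1,2,3,4.\<close>
definition vf :: "(real \<Rightarrow> real \<Rightarrow> real) \<Rightarrow> real^4 \<Rightarrow> real^4" where
  "vf Om p = vector [p$2, 2 * p$4 + pd 1 0 Om (p$1) (p$3),
                     p$4, - 2 * p$2 + pd 0 1 Om (p$1) (p$3)]"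

definition jacobi :: "(real \<Rightarrow> real \<Rightarrow> real) \<Rightarrow> real^4 \<Rightarrow> real" where
  "jacobi Om p = - ((p$2)\<^sup>2 + (p$4)\<^sup>2) + 2 * Om (p$1) (p$3)"

definition Lc :: "real \<Rightarrow> real \<Rightarrow> real^4" where
  "Lc x0 y0 = vector [x0, 0, y0, 0]"

definition lam_plus :: "(real \<Rightarrow> real \<Rightarrow> real) \<Rightarrow> real \<Rightarrow> real \<Rightarrow> real" where
  "lam_plus Om x0 y0 = - sqrt (-4 + pd 2 0 Om x0 y0 + pd 0 2 Om x0 y0)"

definition lam_minus :: "(real \<Rightarrow> real \<Rightarrow> real) \<Rightarrow> real \<Rightarrow> real \<Rightarrow> real" where
  "lam_minus Om x0 y0 = sqrt (-4 + pd 2 0 Om x0 y0 + pd 0 2 Om x0 y0)"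

definition vlam :: "(real \<Rightarrow> real \<Rightarrow> real) \<Rightarrow> real \<Rightarrow> real \<Rightarrow> real \<Rightarrow> real^4" where
  "vlam Om x0 y0 l = (let Oxy = pd 1 1 Om x0 y0; Oyy = pd 0 2 Om x0 y0 in
      vector [Oxy + 2*l, l * (Oxy + 2*l), Oyy - 4, l * (Oyy - 4)])"

text \<open>The matrix C whose columns are v0, v1, v+, v-.\<close>
definition Cmat :: "(real \<Rightarrow> real \<Rightarrow> real) \<Rightarrow> real \<Rightarrow> real \<Rightarrow> real^4^4" where
  "Cmat Om x0 y0 = (let Oxx = pd 2 0 Om x0 y0; Oxy = pd 1 1 Om x0 y0; Oyy = pd 0 2 Om x0 y0;
      v0 = vector [Oyy, 0, - Oxy, 0] :: real^4;
      v1 = vector [Oxy, Oyy, 2 - Oxx, - Oxy] :: real^4;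
      vp = vlam Om x0 y0 (lam_plus Om x0 y0);
      vm = vlam Om x0 y0 (lam_minus Om x0 y0)
    in transpose (vector [v0, v1, vp, vm]))"

definition Fvf :: "(real \<Rightarrow> real \<Rightarrow> real) \<Rightarrow> real \<Rightarrow> real \<Rightarrow> real^4 \<Rightarrow> real^4" where
  "Fvf Om x0 y0 z = matrix_inv (Cmat Om x0 y0) *v vf Om (Cmat Om x0 y0 *v z + Lc x0 y0)"

definition Ecal :: "(real \<Rightarrow> real \<Rightarrow> real) \<Rightarrow> real \<Rightarrow> real \<Rightarrow> real^4 \<Rightarrow> real" where
  "Ecal Om x0 y0 z = jacobi Om (Cmat Om x0 y0 *v z + Lc x0 y0)"

text \<open>Formal power series in two variables are represented by their coefficient
  arrays: K i j is the coefficient of x^i y^j.\<close>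

definition trunc2 :: "(nat \<Rightarrow> nat \<Rightarrow> 'a::real_vector) \<Rightarrow> nat \<Rightarrow> real \<Rightarrow> real \<Rightarrow> 'a" where
  "trunc2 K N x y = (\<Sum>a\<le>N. \<Sum>b\<le>N - a. (x ^ a * y ^ b) *\<^sub>R K a b)"

text \<open>Coefficients of the formal composition G o K (G replaced by its Taylor series at 0,
  K without constant term): coefficient (i,j) of the Taylor expansion at 0 of G composed
  with the polynomial truncation of K of degree i+j.\<close>
definition comp2 :: "(real^4 \<Rightarrow> real^4) \<Rightarrow> (nat \<Rightarrow> nat \<Rightarrow> real^4) \<Rightarrow> nat \<Rightarrow> nat \<Rightarrow> real^4" where
  "comp2 G K i j = (\<chi> k. pd i j (\<lambda>x y. G (trunc2 K (i + j) x y) $ k) 0 0 / (fact i * fact j))"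

text \<open>Coefficients of DK(y) r(y) = (d/dx K) r1 + (d/dy K) r2 (formal products).\<close>
definition DKr :: "(nat \<Rightarrow> nat \<Rightarrow> real^4) \<Rightarrow> (nat \<Rightarrow> nat \<Rightarrow> real) \<Rightarrow> (nat \<Rightarrow> nat \<Rightarrow> real)
      \<Rightarrow> nat \<Rightarrow> nat \<Rightarrow> real^4" where
  "DKr K r1 r2 i j = (\<Sum>a\<le>i. \<Sum>b\<le>j.
      (real (a + 1) * r1 (i - a) (j - b)) *\<^sub>R K (a + 1) b
    + (real (b + 1) * r2 (i - a) (j - b)) *\<^sub>R K a (b + 1))"

text \<open>The formal series t \<mapsto> K(h1(t), h2(t)) componentwise, with h1 = sum c_n t^n and h2 = t^3.\<close>
definition K_of_h :: "(nat \<Rightarrow> nat \<Rightarrow> real^4) \<Rightarrow> (nat \<Rightarrow> real) \<Rightarrow> (real fps)^4" where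
  "K_of_h K c = (\<chi> k. Abs_fps (\<lambda>n. fps_nth
      (\<Sum>i\<le>n. \<Sum>j\<le>n. fps_const (K i j $ k) * Abs_fps c ^ i * fps_X ^ (3 * j)) n))"

text \<open>Formal composition of (the Taylor series at 0 of) a scalar function G on R^4 with a
  formal series P in t without constant term: the n-th coefficient is the n-th Taylor
  coefficient at 0 of G composed with the degree-n truncation of P.\<close>
definition comp1 :: "(real^4 \<Rightarrow> real) \<Rightarrow> (real fps)^4 \<Rightarrow> real fps" where
  "comp1 G P = Abs_fps (\<lambda>n. (deriv ^^ n)
      (\<lambda>t. G (\<chi> k. \<Sum>m\<le>n. fps_nth (P $ k) m * t ^ m)) 0 / fact n)"

end

theory Submission
  imports Defs "HOL-Complex_Analysis.Complex_Analysis"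
begin

text \<open>
  Put \<open>h(t) = (c(t), t\<^sup>3)\<close> with \<open>c(t) = c\<^sub>2 t\<^sup>2 + c\<^sub>3 t\<^sup>3 + \<dots>\<close> and let \<open>a, b, d\<close> be
  \<open>\<Omega>\<^sub>x\<^sub>x, \<Omega>\<^sub>x\<^sub>y, \<Omega>\<^sub>y\<^sub>y\<close> at \<open>L\<^sub>c\<close>. Since \<open>K\<close> is the identity to first order, the displacement
  \<open>P = C K(h(t))\<close> from \<open>L\<^sub>c\<close> starts with \<open>P\<^sub>1 = d c\<^sub>2 t\<^sup>2\<close>, \<open>P\<^sub>3 = -b c\<^sub>2 t\<^sup>2\<close>,
  \<open>P\<^sub>2 = d t\<^sup>3\<close>, \<open>P\<^sub>4 = -b t\<^sup>3\<close>, and \<open>b P\<^sub>1 + d P\<^sub>3 = 2 d t\<^sup>3 + \<dots>\<close> because \<open>(d, -b)\<close>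
  spans the kernel of the Hessian.
  In \<open>E(L\<^sub>c + P) - E(L\<^sub>c) = -(P\<^sub>2\<^sup>2 + P\<^sub>4\<^sup>2) + 2 (\<Omega>(x\<^sub>0 + P\<^sub>1, y\<^sub>0 + P\<^sub>3) - \<Omega>(x\<^sub>0, y\<^sub>0))\<close>
  the gradient term vanishes, the quadratic term is \<open>(b P\<^sub>1 + d P\<^sub>3)\<^sup>2 / (2 d)\<close> as \<open>a d = b\<^sup>2\<close>,
  and the cubic term is \<open>c\<^sub>2\<^sup>3 \<E> t\<^sup>6 / 6 + \<dots>\<close>, everything else being \<open>O(t\<^sup>8)\<close>. So the
  series starts at \<open>t\<^sup>6\<close> with coefficient \<open>d (4 - a - d) + c\<^sub>2\<^sup>3 \<E> / 3\<close>, which vanishes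
  for a real \<open>c\<^sub>2 \<noteq> 0\<close> as \<open>\<E> \<noteq> 0\<close> and \<open>a + d > 4\<close>. Changing \<open>c\<^sub>N\<close> (\<open>N \<ge> 3\<close>) changes
  the coefficient of \<open>t\<^sup>N\<^sup>+\<^sup>4\<close> by \<open>c\<^sub>2\<^sup>2 \<E>\<close> times the change and no lower one, so the
  remaining \<open>c\<^sub>N\<close> are found one at a time.
\<close>

notation fps_nth (infixl "$$" 75)

subsection \<open>Orders of formal power series\<close>

definition vanishes_to :: "nat \<Rightarrow> 'a::zero fps \<Rightarrow> bool" where
  "vanishes_to k f \<longleftrightarrow> (\<forall>n<k. f $$ n = 0)"

definition leading_term :: "nat \<Rightarrow> 'a::zero \<Rightarrow> 'a fps \<Rightarrow> bool" where
  "leading_term k a f \<longleftrightarrow> vanishes_to k f \<and> f $$ k = a"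

definition perturbation :: "nat \<Rightarrow> nat \<Rightarrow> 'a::group_add fps \<Rightarrow> 'a fps \<Rightarrow> bool" where
  "perturbation k N f f' \<longleftrightarrow> vanishes_to k f \<and> vanishes_to k f' \<and> vanishes_to N (f' - f)"

lemma vanishes_to_mono: "vanishes_to k f \<Longrightarrow> j \<le> k \<Longrightarrow> vanishes_to j f"
  by (auto simp: vanishes_to_def)

lemma vanishes_to_0 [simp]: "vanishes_to 0 f"
  and vanishes_to_zero [simp]: "vanishes_to k 0"
  by (simp_all add: vanishes_to_def)

lemma vanishes_to_Suc_iff: "vanishes_to (Suc k) f \<longleftrightarrow> vanishes_to k f \<and> f $$ k = 0"
  by (auto simp: vanishes_to_def less_Suc_eq)

lemma vanishes_to_add: "vanishes_to k f \<Longrightarrow> vanishes_to k g \<Longrightarrow> vanishes_to k (f + g)"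
  and vanishes_to_uminus: "vanishes_to k f \<Longrightarrow> vanishes_to k (- f)"
  and vanishes_to_cmult: "vanishes_to k f \<Longrightarrow> vanishes_to k (fps_const c * f)"
  for f g :: "real fps"
  by (simp_all add: vanishes_to_def)

lemma vanishes_to_sum:
  "(\<And>i. i \<in> A \<Longrightarrow> vanishes_to k (f i)) \<Longrightarrow> vanishes_to k (\<Sum>i\<in>A. f i :: real fps)"
  by (induction A rule: infinite_finite_induct) (auto intro: vanishes_to_add)

lemma vanishes_to_X_power: "vanishes_to k (fps_X ^ k :: real fps)"
  by (simp add: vanishes_to_def fps_X_power_iff)

lemma mult_nth_vanishing:
  fixes f g :: "real fps"
  assumes "vanishes_to k f" "vanishes_to l g" "n \<le> k + l"
  shows "(f * g) $$ n = (if n = k + l then f $$ k * g $$ l else 0)"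
proof -
  have zero: "f $$ i * g $$ (n - i) = 0" if "i \<le> n" "i \<noteq> k \<or> n \<noteq> k + l" for i
  proof (cases "i < k")
    case True then show ?thesis using assms(1) by (simp add: vanishes_to_def)
  next
    case False then have "n - i < l" using that assms(3) by auto
    then show ?thesis using assms(2) by (simp add: vanishes_to_def)
  qed
  have "(f * g) $$ n = (\<Sum>i=0..n. f $$ i * g $$ (n - i))" by (rule fps_mult_nth)
  also have "\<dots> = (\<Sum>i\<in>{0..n} \<inter> {k}. f $$ i * g $$ (n - i))"
    by (rule sum.mono_neutral_right) (use zero in auto)
  also have "\<dots> = (if n = k + l then f $$ k * g $$ l else 0)"
    using zero[of k] by (cases "k \<le> n") auto
  finally show ?thesis .
qed

lemma vanishes_to_mult:
  "vanishes_to k f \<Longrightarrow> vanishes_to l g \<Longrightarrow> vanishes_to (k + l) (f * g :: real fps)"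
  using mult_nth_vanishing[of k f l g] by (auto simp: vanishes_to_def)

lemma vanishes_to_power: "vanishes_to k f \<Longrightarrow> vanishes_to (i * k) (f ^ i :: real fps)"
  by (induction i) (auto intro: vanishes_to_mult)

lemma leading_term_vanishes_to: "leading_term k a f \<Longrightarrow> vanishes_to k f"
  by (simp add: leading_term_def)

lemma leading_term_0_iff: "leading_term k 0 f \<longleftrightarrow> vanishes_to (Suc k) f"
  by (simp add: leading_term_def vanishes_to_Suc_iff)

lemma leading_term_0I: "vanishes_to m f \<Longrightarrow> k < m \<Longrightarrow> leading_term k 0 f"
  by (auto simp: leading_term_0_iff intro: vanishes_to_mono)

lemma leading_term_subst: "leading_term k a f \<Longrightarrow> k = k' \<Longrightarrow> a = a' \<Longrightarrow> leading_term k' a' f"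
  by simp

lemma leading_term_add: "leading_term k a f \<Longrightarrow> leading_term k b g \<Longrightarrow> leading_term k (a + b) (f + g)"
  and leading_term_uminus: "leading_term k a f \<Longrightarrow> leading_term k (- a) (- f)"
  and leading_term_cmult: "leading_term k a f \<Longrightarrow> leading_term k (c * a) (fps_const c * f)"
  for f g :: "real fps"
  by (simp_all add: leading_term_def vanishes_to_add vanishes_to_uminus vanishes_to_cmult)

lemma leading_term_double: "leading_term k a f \<Longrightarrow> leading_term k (2 * a) (2 * f :: real fps)"
  using leading_term_cmult[of k a f 2] by (simp add: numeral_fps_const)

lemma leading_term_mult:
  "leading_term k a f \<Longrightarrow> leading_term l b g \<Longrightarrow> leading_term (k + l) (a * b) (f * g :: real fps)"
  by (auto simp: leading_term_def mult_nth_vanishing vanishes_to_mult)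

lemma leading_term_power: "leading_term k a f \<Longrightarrow> leading_term (i * k) (a ^ i) (f ^ i :: real fps)"
proof (induction i)
  case 0 then show ?case by (simp add: leading_term_def)
next
  case (Suc i)
  then have "leading_term (k + i * k) (a * a ^ i) (f * f ^ i)" by (intro leading_term_mult)
  then show ?case by (simp add: add.commute)
qed

lemma perturbation_mult:
  fixes a a' b b' :: "real fps"
  assumes "perturbation k1 N1 a a'" "perturbation k2 N2 b b'"
  shows "perturbation (k1 + k2) (min (N1 + k2) (k1 + N2)) (a * b) (a' * b')"
proof -
  have "vanishes_to (min (N1 + k2) (k1 + N2)) ((a' - a) * b' + a * (b' - b))"
    using assms unfolding perturbation_def
    by (intro vanishes_to_add vanishes_to_mono[OF vanishes_to_mult]) auto
  moreover have "(a' - a) * b' + a * (b' - b) = a' * b' - a * b" by (simp add: algebra_simps)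
  ultimately show ?thesis using assms by (auto simp: perturbation_def intro: vanishes_to_mult)
qed

lemma perturbation_mono: "perturbation k N a a' \<Longrightarrow> k' \<le> k \<Longrightarrow> N' \<le> N \<Longrightarrow> perturbation k' N' a a'"
  by (auto simp: perturbation_def intro: vanishes_to_mono)

lemma perturbation_add:
  "perturbation k N a a' \<Longrightarrow> perturbation k N b b' \<Longrightarrow> perturbation k N (a + b) (a' + b')"
  for a a' b b' :: "real fps"
  unfolding perturbation_def
  by (metis add_diff_add vanishes_to_add)

lemma perturbation_cmult:
  "perturbation k N a a' \<Longrightarrow> perturbation k N (fps_const c * a) (fps_const c * a')"
  for a a' :: "real fps"
  unfolding perturbation_def by (metis right_diff_distrib vanishes_to_cmult)

lemma perturbation_same: "perturbation 0 N c (c :: real fps)"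
  by (simp add: perturbation_def)

lemma perturbation_power:
  assumes "perturbation k N a a'" "1 \<le> i" "k \<le> N"
  shows "perturbation (i * k) ((i - 1) * k + N) (a ^ i) (a' ^ i :: real fps)"
  using assms(2)
proof (induction i rule: dec_induct)
  case base then show ?case using assms(1) by simp
next
  case (step i)
  have "perturbation (k + i * k) (min (N + i * k) (k + ((i - 1) * k + N))) (a * a ^ i) (a' * a' ^ i)"
    by (rule perturbation_mult[OF assms(1) step.IH])
  moreover have "min (N + i * k) (k + ((i - 1) * k + N)) = (Suc i - 1) * k + N"
    using step.hyps by (cases i) (auto simp: algebra_simps)
  ultimately show ?case by (simp add: add.commute)
qed

subsection \<open>Real functions with convergent expansions\<close>

definition complex_fps :: "real fps \<Rightarrow> complex fps" where
  "complex_fps F = Abs_fps (\<lambda>n. complex_of_real (F $$ n))"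

lemma complex_fps_nth [simp]: "complex_fps F $$ n = of_real (F $$ n)"
  by (simp add: complex_fps_def)

lemma complex_fps_add [simp]: "complex_fps (F + G) = complex_fps F + complex_fps G"
  and complex_fps_diff [simp]: "complex_fps (F - G) = complex_fps F - complex_fps G"
  and complex_fps_uminus [simp]: "complex_fps (- F) = - complex_fps F"
  and complex_fps_const [simp]: "complex_fps (fps_const c) = fps_const (of_real c)"
  and complex_fps_1 [simp]: "complex_fps 1 = 1"
  and complex_fps_mult [simp]: "complex_fps (F * G) = complex_fps F * complex_fps G"
  and complex_fps_binomial: "complex_fps (fps_binomial c) = fps_binomial (of_real c)"
  by (simp_all add: fps_eq_iff fps_mult_nth gbinomial_prod_rev of_real_prod)

lemma complex_fps_power [simp]: "complex_fps (F ^ n) = complex_fps F ^ n"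
  by (induction n) simp_all

lemma complex_fps_compose: "complex_fps (F oo G) = complex_fps F oo complex_fps G"
  by (simp add: fps_eq_iff fps_compose_nth flip: complex_fps_power)

lemma complex_fps_X [simp]: "complex_fps fps_X = fps_X"
  by (simp add: fps_eq_iff fps_X_nth)

text \<open>Only complex analysis gives access to the coefficients of a convergent expansion
  (\<open>fps_nth_fps_expansion\<close>), so a real function is expanded through a holomorphic extension.\<close>
definition has_real_fps_expansion :: "(real \<Rightarrow> real) \<Rightarrow> real fps \<Rightarrow> bool" where
  "has_real_fps_expansion f F \<longleftrightarrow>
     (\<exists>g. g has_fps_expansion complex_fps F \<and> (\<forall>\<^sub>F t in nhds 0. g (of_real t) = of_real (f t)))"

lemma has_real_fps_expansionE:
  assumes "has_real_fps_expansion f F"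
  obtains g where "g has_fps_expansion complex_fps F" "\<forall>\<^sub>F t in nhds 0. g (of_real t)
      = of_real (f t)"
  using assms unfolding has_real_fps_expansion_def by blast

lemma has_real_fps_expansion_const: "has_real_fps_expansion (\<lambda>_. c) (fps_const c)"
  unfolding has_real_fps_expansion_def by (auto intro!: exI[of _ "\<lambda>_. of_real c"])

lemma has_real_fps_expansion_X: "has_real_fps_expansion (\<lambda>t. t) fps_X"
  unfolding has_real_fps_expansion_def by (auto intro!: exI[of _ "\<lambda>z. z"] has_fps_expansion_fps_X)

lemma has_real_fps_expansion_numeral: "has_real_fps_expansion (\<lambda>_. numeral k) (numeral k)"
  using has_real_fps_expansion_const[of "numeral k"] by (simp add: numeral_fps_const)

lemma has_real_fps_expansion_add:
  assumes "has_real_fps_expansion f F" "has_real_fps_expansion g G"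
  shows "has_real_fps_expansion (\<lambda>t. f t + g t) (F + G)"
proof -
  obtain f' where f': "f' has_fps_expansion complex_fps F" "\<forall>\<^sub>F t in nhds 0. f' (of_real t)
      = of_real (f t)"
    using assms(1) by (rule has_real_fps_expansionE)
  obtain g' where g': "g' has_fps_expansion complex_fps G" "\<forall>\<^sub>F t in nhds 0. g' (of_real t)
      = of_real (g t)"
    using assms(2) by (rule has_real_fps_expansionE)
  show ?thesis unfolding has_real_fps_expansion_def
    using has_fps_expansion_add[OF f'(1) g'(1)] eventually_conj[OF f'(2) g'(2)]
    by (intro exI[of _ "\<lambda>z. f' z + g' z"] conjI) (auto elim!: eventually_mono)
qed

lemma has_real_fps_expansion_mult:
  assumes "has_real_fps_expansion f F" "has_real_fps_expansion g G"
  shows "has_real_fps_expansion (\<lambda>t. f t * g t) (F * G)"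
proof -
  obtain f' where f': "f' has_fps_expansion complex_fps F" "\<forall>\<^sub>F t in nhds 0. f' (of_real t)
      = of_real (f t)"
    using assms(1) by (rule has_real_fps_expansionE)
  obtain g' where g': "g' has_fps_expansion complex_fps G" "\<forall>\<^sub>F t in nhds 0. g' (of_real t)
      = of_real (g t)"
    using assms(2) by (rule has_real_fps_expansionE)
  show ?thesis unfolding has_real_fps_expansion_def
    using has_fps_expansion_mult[OF f'(1) g'(1)] eventually_conj[OF f'(2) g'(2)]
    by (intro exI[of _ "\<lambda>z. f' z * g' z"] conjI) (auto elim!: eventually_mono)
qed

lemma has_real_fps_expansion_uminus:
  assumes "has_real_fps_expansion f F"
  shows "has_real_fps_expansion (\<lambda>t. - f t) (- F)"
proof -
  obtain f' where f': "f' has_fps_expansion complex_fps F" "\<forall>\<^sub>F t in nhds 0. f' (of_real t)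
      = of_real (f t)"
    using assms by (rule has_real_fps_expansionE)
  show ?thesis unfolding has_real_fps_expansion_def
    using has_fps_expansion_minus[OF f'(1)] f'(2)
    by (intro exI[of _ "\<lambda>z. - f' z"] conjI) (auto elim!: eventually_mono)
qed

lemma has_real_fps_expansion_diff:
  "has_real_fps_expansion f F \<Longrightarrow> has_real_fps_expansion g G \<Longrightarrow>
    has_real_fps_expansion (\<lambda>t. f t - g t) (F - G)"
  using has_real_fps_expansion_add[OF _ has_real_fps_expansion_uminus, of f F g G] by simp

lemma has_real_fps_expansion_power:
  "has_real_fps_expansion f F \<Longrightarrow> has_real_fps_expansion (\<lambda>t. f t ^ n) (F ^ n)"
  by (induction n) (auto intro: has_real_fps_expansion_mult
      simp: has_real_fps_expansion_const[of 1, simplified])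

lemma has_real_fps_expansion_sum:
  "finite A \<Longrightarrow> (\<And>i. i \<in> A \<Longrightarrow> has_real_fps_expansion (f i) (F i)) \<Longrightarrow>
    has_real_fps_expansion (\<lambda>t. \<Sum>i\<in>A. f i t) (\<Sum>i\<in>A. F i)"
  by (induction A rule: finite_induct)
    (auto intro: has_real_fps_expansion_add simp: has_real_fps_expansion_const[of 0, simplified])

lemma higher_deriv_real_restriction:
  fixes g :: "complex \<Rightarrow> complex" and f :: "real \<Rightarrow> real"
  assumes "g holomorphic_on S" "open S" "open U" "\<And>t. t \<in> U \<Longrightarrow> of_real t \<in> S"
    and "\<And>t. t \<in> U \<Longrightarrow> g (of_real t) = of_real (f t)" "t \<in> U"
  shows "(deriv ^^ n) f t = Re ((deriv ^^ n) g (of_real t))"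
  using assms(6)
proof (induction n arbitrary: t)
  case 0 then show ?case using assms(5) by simp
next
  case (Suc n)
  have "(deriv ^^ n) g holomorphic_on S" using assms(1,2) by (rule holomorphic_higher_deriv)
  then have "((deriv ^^ n) g has_field_derivative deriv ((deriv ^^ n) g) (of_real t)) (at (of_real t))"
    using assms(2,4) Suc.prems by (intro holomorphic_derivI)
  then have "((\<lambda>x. Re ((deriv ^^ n) g (of_real x))) has_real_derivative
      Re (deriv ((deriv ^^ n) g) (of_real t))) (at t)"
    by (intro has_field_derivative_Re has_vector_derivative_real_field)
  then have "((deriv ^^ n) f has_real_derivative Re (deriv ((deriv ^^ n) g) (of_real t))) (at t)"
    by (rule has_field_derivative_transform_within_open[OF _ assms(3) Suc.prems]) (simp add: Suc.IH)
  then show ?case by (simp add: DERIV_imp_deriv)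
qed

lemma fps_nth_real_fps_expansion:
  assumes "has_real_fps_expansion f F"
  shows "(deriv ^^ n) f 0 / fact n = F $$ n"
proof -
  obtain g where g: "g has_fps_expansion complex_fps F" "\<forall>\<^sub>F t in nhds 0. g (of_real t)
      = of_real (f t)"
    using assms by (rule has_real_fps_expansionE)
  obtain S where S: "open S" "0 \<in> S" "g holomorphic_on S"
    using has_fps_expansion_imp_holomorphic[OF g(1)] by blast
  obtain V where V: "open V" "0 \<in> V" "\<And>t. t \<in> V \<Longrightarrow> g (of_real t) = of_real (f t)"
    using g(2) unfolding eventually_nhds by blast
  have "open (V \<inter> of_real -` S)"
    using V(1) S(1) by (intro open_Int open_vimage) (auto intro: continuous_intros)
  then have "(deriv ^^ n) f 0 = Re ((deriv ^^ n) g 0)"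
    using higher_deriv_real_restriction[OF S(3,1), of "V \<inter> of_real -` S" f 0 n] V S by auto
  moreover have "complex_fps F $$ n = (deriv ^^ n) g 0 / fact n"
    by (rule fps_nth_fps_expansion[OF g(1)])
  ultimately show ?thesis
    by (metis Re_complex_of_real Re_divide_of_real complex_fps_nth of_real_fact)
qed

text \<open>The expansion of \<open>1 / sqrt F\<close> as \<open>F\<^sub>0\<^sup>-\<^sup>1\<^sup>/\<^sup>2 (1 + w)\<^sup>-\<^sup>1\<^sup>/\<^sup>2\<close> with \<open>w = F / F\<^sub>0 - 1\<close>.\<close>
definition fps_inv_sqrt :: "real fps \<Rightarrow> real fps" where
  "fps_inv_sqrt F =
     fps_const (1 / sqrt (F $$ 0)) * (fps_binomial (-1/2) oo (fps_const (1 / F $$ 0) * F - 1))"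

lemma eventually_Re_pos_near_0:
  assumes "g has_fps_expansion F" "Re (F $$ 0) > 0"
  shows "\<forall>\<^sub>F t in nhds 0. Re (g (of_real t)) > 0"
proof -
  have "isCont g (of_real 0)" using has_fps_expansion_imp_continuous[OF assms(1), of UNIV] by simp
  then have "isCont (\<lambda>t::real. g (of_real t)) 0"
    by (rule isCont_o2[rotated]) (intro continuous_intros)
  then have "isCont (\<lambda>t::real. Re (g (of_real t))) 0" by (rule continuous_Re)
  moreover have "g 0 = F $$ 0" by (rule has_fps_expansion_imp_0_eq_fps_nth_0[OF assms(1)])
  ultimately have "((\<lambda>t::real. Re (g (of_real t))) \<longlongrightarrow> Re (F $$ 0)) (at 0)"
    by (simp add: isCont_def)
  then have "\<forall>\<^sub>F t in at 0. Re (g (of_real t)) > 0" using assms(2) by (rule order_tendstoD(1))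
  then show ?thesis using assms(2) \<open>g 0 = F $$ 0\<close> by (simp add: eventually_nhds_conv_at)
qed

lemma has_real_fps_expansion_inv_sqrt:
  assumes "has_real_fps_expansion f F" "F $$ 0 > 0"
  shows "has_real_fps_expansion (\<lambda>t. 1 / sqrt (f t)) (fps_inv_sqrt F)"
proof -
  define D where "D = F $$ 0"
  have D: "D > 0" using assms(2) by (simp add: D_def)
  obtain g where g: "g has_fps_expansion complex_fps F" "\<forall>\<^sub>F t in nhds 0. g (of_real t)
      = of_real (f t)"
    using assms(1) by (rule has_real_fps_expansionE)
  define w where "w z = g z * of_real (1 / D) - 1" for z
  define h where "h = (\<lambda>x. (1 + x) powr (-1/2 :: complex)) \<circ> w"
  have "w has_fps_expansion complex_fps F * fps_const (of_real (1 / D)) - 1"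
    unfolding w_def
    by (intro has_fps_expansion_diff has_fps_expansion_cmult_right g(1) has_fps_expansion_1)
  then have "h has_fps_expansion (fps_binomial (-1/2) oo (complex_fps F * fps_const (of_real (1 / D)) - 1))"
    unfolding h_def using D
    by (intro has_fps_expansion_compose[OF has_fps_expansion_binomial_complex])
      (simp_all add: D_def)
  then have "(\<lambda>z. of_real (1 / sqrt D) * h z) has_fps_expansion complex_fps (fps_inv_sqrt F)"
    by (rule has_fps_expansion_schematicI[OF has_fps_expansion_cmult_left])
       (simp add: fps_inv_sqrt_def complex_fps_compose complex_fps_binomial D_def mult.commute)
  moreover have "\<forall>\<^sub>F t in nhds 0. of_real (1 / sqrt D) * h (of_real t) = of_real (1 / sqrt (f t))"
    using eventually_conj[OF g(2) eventually_Re_pos_near_0[OF g(1)]] 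
  proof (rule eventually_mono)
    fix t assume t: "g (of_real t) = of_real (f t) \<and> 0 < Re (g (of_real t))"
    then have ft: "f t > 0" by (metis Re_complex_of_real)
    have "h (of_real t) = (of_real (f t / D)) powr (of_real (-1/2))"
      using t by (simp add: h_def w_def)
    also have "\<dots> = of_real ((f t / D) powr (-1/2))"
      using ft D by (intro powr_of_real) simp
    finally have "of_real (1 / sqrt D) * h (of_real t)
        = of_real (1 / sqrt D * (f t / D) powr (-1/2))"
      by simp
    also have "1 / sqrt D * (f t / D) powr (-1/2) = 1 / sqrt (f t)"
      using ft D by (simp add: powr_minus powr_half_sqrt real_sqrt_divide)
    finally show "of_real (1 / sqrt D) * h (of_real t) = of_real (1 / sqrt (f t))" .
  qed (simp add: assms(2))
  ultimately show ?thesis unfolding has_real_fps_expansion_def by blast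
qed

subsection \<open>The Jacobi integral along a formal curve\<close>

definition agree_below :: "nat \<Rightarrow> real fps \<Rightarrow> real fps \<Rightarrow> bool" where
  "agree_below N f g \<longleftrightarrow> (\<forall>n<N. f $$ n = g $$ n)"

lemma agree_below_refl [simp]: "agree_below N f f"
  by (simp add: agree_below_def)

lemma agree_below_add: "agree_below N f f' \<Longrightarrow> agree_below N g g' \<Longrightarrow> agree_below N (f + g) (f' + g')"
  and agree_below_diff: "agree_below N f f' \<Longrightarrow> agree_below N g g' \<Longrightarrow> agree_below N (f - g) (f' - g')"
  and agree_below_uminus: "agree_below N f f' \<Longrightarrow> agree_below N (- f) (- f')"
  by (simp_all add: agree_below_def)

lemma agree_below_mult: "agree_below N f f' \<Longrightarrow> agree_below N g g' \<Longrightarrow> agree_below N (f * g) (f' * g')"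
  by (auto simp: agree_below_def fps_mult_nth intro!: sum.cong)

lemma agree_below_power: "agree_below N f f' \<Longrightarrow> agree_below N (f ^ i) (f' ^ i)"
  by (induction i) (auto intro: agree_below_mult)

lemma agree_below_sum:
  "(\<And>i. i \<in> A \<Longrightarrow> agree_below N (f i) (g i)) \<Longrightarrow> agree_below N (sum f A) (sum g A)"
  by (induction A rule: infinite_finite_induct) (auto intro: agree_below_add)

lemma agree_below_compose:
  assumes "agree_below N g g'"
  shows "agree_below N (f oo g) (f oo g')"
proof -
  have "agree_below N (g ^ i) (g' ^ i)" for i using assms by (rule agree_below_power)
  then show ?thesis by (auto simp: agree_below_def fps_compose_nth intro!: sum.cong)
qed

lemma agree_below_inv_sqrt:
  assumes "agree_below N F F'" "0 < N"
  shows "agree_below N (fps_inv_sqrt F) (fps_inv_sqrt F')"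
proof -
  have F0: "F' $$ 0 = F $$ 0" using assms by (simp add: agree_below_def)
  show ?thesis unfolding fps_inv_sqrt_def F0
    by (intro agree_below_mult agree_below_compose agree_below_diff assms(1) agree_below_refl)
qed

lemma agree_below_cutoff: "agree_below N (fps_cutoff N F) F"
  by (simp add: agree_below_def)

definition jacobi_fps :: "(nat \<Rightarrow> real) \<Rightarrow> (nat \<Rightarrow> real) \<Rightarrow> (nat \<Rightarrow> real) \<Rightarrow> real \<Rightarrow> real \<Rightarrow>
    real fps \<Rightarrow> real fps \<Rightarrow> real fps \<Rightarrow> real fps \<Rightarrow> real fps" where
  "jacobi_fps m px py x0 y0 p1 p2 p3 p4 =
     - (p2^2 + p4^2) + 2 * (fps_const (1/2) * ((fps_const x0 + p1)^2 + (fps_const y0 + p3)^2)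
     + (\<Sum>j\<in>{1,2,3}. fps_const (m j) *
         fps_inv_sqrt ((fps_const x0 + p1 - fps_const (px j))^2
             + (fps_const y0 + p3 - fps_const (py j))^2)))"

lemma agree_below_jacobi_fps:
  assumes "agree_below (Suc n) p1 q1" "agree_below (Suc n) p2 q2" "agree_below (Suc n) p3 q3"
    "agree_below (Suc n) p4 q4"
  shows "agree_below (Suc n) (jacobi_fps m px py x0 y0 p1 p2 p3 p4) (jacobi_fps m px py x0 y0 q1 q2 q3 q4)"
  unfolding jacobi_fps_def
  by (intro agree_below_add agree_below_uminus agree_below_mult agree_below_power agree_below_refl
      agree_below_sum agree_below_inv_sqrt agree_below_diff assms) simp

lemma has_real_fps_expansion_jacobi_fps:
  assumes "has_real_fps_expansion f1 p1" "has_real_fps_expansion f2 p2"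
    "has_real_fps_expansion f3 p3" "has_real_fps_expansion f4 p4" "p1 $$ 0 = 0" "p3 $$ 0 = 0"
    "\<And>j. j \<in> {1,2,3} \<Longrightarrow> (x0 - px j)^2 + (y0 - py j)^2 > 0"
  shows "has_real_fps_expansion
    (\<lambda>t. - (f2 t^2 + f4 t^2) + 2 * (1/2 * ((x0 + f1 t)^2 + (y0 + f3 t)^2)
       + (\<Sum>j\<in>{1,2,3}. m j * (1 / sqrt ((x0 + f1 t - px j)^2 + (y0 + f3 t - py j)^2)))))
    (jacobi_fps m px py x0 y0 p1 p2 p3 p4)"
  unfolding jacobi_fps_def
proof (intro has_real_fps_expansion_add has_real_fps_expansion_uminus has_real_fps_expansion_mult
    has_real_fps_expansion_power has_real_fps_expansion_numeral has_real_fps_expansion_const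
    has_real_fps_expansion_sum has_real_fps_expansion_inv_sqrt has_real_fps_expansion_diff assms(1-4))
  fix j :: nat assume "j \<in> {1,2,3}"
  then show "0 < ((fps_const x0 + p1 - fps_const (px j))\<^sup>2 + (fps_const y0 + p3 - fps_const (py j))\<^sup>2) $$ 0"
    using assms(5-7) by (simp add: fps_nth_power_0)
qed simp

definition fps_mat_vec :: "real^'n^'m \<Rightarrow> real fps^'n \<Rightarrow> 'm \<Rightarrow> real fps" where
  "fps_mat_vec C Z i = (\<Sum>k\<in>UNIV. fps_const (C $ i $ k) * Z $ k)"

lemma fps_mat_vec_nth: "fps_mat_vec C Z i $$ n = (\<Sum>k\<in>UNIV. C $ i $ k * Z $ k $$ n)"
  by (simp add: fps_mat_vec_def fps_sum_nth)

lemma matrix_vector_mult_polynomial: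
  "(C *v (\<chi> k. \<Sum>m\<le>n. Z $ k $$ m * t ^ m)) $ i = (\<Sum>m\<le>n. fps_mat_vec C Z i $$ m * t ^ m)"
  by (simp add: matrix_vector_mult_def fps_mat_vec_nth sum_distrib_left sum_distrib_right
      mult.assoc sum.swap[where B = "{..n}"])

lemma has_real_fps_expansion_polynomial:
  "has_real_fps_expansion (\<lambda>t. \<Sum>m\<le>n. F $$ m * t ^ m) (fps_cutoff (Suc n) F)"
proof -
  have "fps_cutoff (Suc n) F = (\<Sum>m\<le>n. fps_const (F $$ m) * fps_X ^ m)"
    by (rule fps_ext) (simp add: fps_sum_nth if_distrib[of "(*) _"] cong: if_cong)
  then show ?thesis
    by (simp only:) (intro has_real_fps_expansion_sum has_real_fps_expansion_mult
        has_real_fps_expansion_const has_real_fps_expansion_power has_real_fps_expansion_X finite_atMost)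
qed

lemma Lc_nth: "Lc x0 y0 $ 1 = x0" "Lc x0 y0 $ 2 = 0" "Lc x0 y0 $ 3 = y0" "Lc x0 y0 $ 4 = 0"
  by (simp_all add: Lc_def vector_def)

theorem comp1_jacobi_eq_jacobi_fps:
  fixes C :: "real^4^4" and Z :: "real fps ^ 4"
  assumes Z0: "\<And>k. Z $ k $$ 0 = 0"
    and off_primaries: "\<And>j. j \<in> {1,2,3} \<Longrightarrow> (x0 - px j)^2 + (y0 - py j)^2 > 0"
  shows "comp1 (\<lambda>z. jacobi (Omega m px py) (C *v z + Lc x0 y0)) Z =
    jacobi_fps m px py x0 y0 (fps_mat_vec C Z 1) (fps_mat_vec C Z 2) (fps_mat_vec C Z 3) (fps_mat_vec C Z 4)"
proof (rule fps_ext)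
  fix n
  define f where "f i t = (\<Sum>m\<le>n. fps_mat_vec C Z i $$ m * t ^ m)" for i t
  define T where "T i = fps_cutoff (Suc n) (fps_mat_vec C Z i)" for i
  have P0: "fps_mat_vec C Z i $$ 0 = 0" for i by (simp add: fps_mat_vec_nth Z0)
  have "(\<lambda>t. jacobi (Omega m px py) (C *v (\<chi> k. \<Sum>m\<le>n. Z $ k $$ m * t ^ m) + Lc x0 y0)) =
      (\<lambda>t. - (f 2 t^2 + f 4 t^2) + 2 * (1/2 * ((x0 + f 1 t)^2 + (y0 + f 3 t)^2)
          + (\<Sum>j\<in>{1,2,3}. m j * (1 / sqrt ((x0 + f 1 t - px j)^2 + (y0 + f 3 t - py j)^2)))))"
    by (rule ext)
      (simp add: jacobi_def Omega_def matrix_vector_mult_polynomial f_def Lc_nth add.commute)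
  then have "comp1 (\<lambda>z. jacobi (Omega m px py) (C *v z + Lc x0 y0)) Z $$ n
      = (deriv ^^ n) (\<lambda>t. - (f 2 t^2 + f 4 t^2) + 2 * (1/2 * ((x0 + f 1 t)^2 + (y0 + f 3 t)^2)
          + (\<Sum>j\<in>{1,2,3}. m j * (1 / sqrt ((x0 + f 1 t - px j)^2 + (y0 + f 3 t - py j)^2))))) 0 / fact n"
    by (simp add: comp1_def)
  also have "\<dots> = jacobi_fps m px py x0 y0 (T 1) (T 2) (T 3) (T 4) $$ n"
    by (intro fps_nth_real_fps_expansion has_real_fps_expansion_jacobi_fps off_primaries)
       (auto simp: f_def T_def has_real_fps_expansion_polynomial P0)
  also have "\<dots> = jacobi_fps m px py x0 y0
      (fps_mat_vec C Z 1) (fps_mat_vec C Z 2) (fps_mat_vec C Z 3) (fps_mat_vec C Z 4) $$ n"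
    using agree_below_jacobi_fps[of n "T 1" _ "T 2" _ "T 3" _ "T 4"]
    by (simp add: T_def agree_below_cutoff agree_below_def)
  finally show "comp1 (\<lambda>z. jacobi (Omega m px py) (C *v z + Lc x0 y0)) Z $$ n =
    jacobi_fps m px py x0 y0 (fps_mat_vec C Z 1) (fps_mat_vec C Z 2) (fps_mat_vec C Z 3)
        (fps_mat_vec C Z 4) $$ n" .
qed

subsection \<open>Taylor expansion of the inverse distances\<close>

lemmas fps_const_arith = fps_const_add[symmetric] fps_const_mult[symmetric] fps_const_power[symmetric]
  fps_const_neg[symmetric] fps_const_sub[symmetric] numeral_fps_const[symmetric]

definition inv_sqrt_binom :: "nat \<Rightarrow> real" where "inv_sqrt_binom k = (-1/2::real) gchoose k"

lemma inv_sqrt_binom_values: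
  "inv_sqrt_binom 0 = 1" "inv_sqrt_binom 1 = -1/2" "inv_sqrt_binom 2 = 3/8" "inv_sqrt_binom 3 = -5/16"
  by (simp_all add: inv_sqrt_binom_def gbinomial_prod_rev numeral_eq_Suc atLeast0_lessThan_Suc)

definition binomial_tail :: "real fps \<Rightarrow> real fps" where
  "binomial_tail w = Abs_fps (\<lambda>n. \<Sum>i\<in>{4..n}. inv_sqrt_binom i * (w ^ i) $$ n)"

lemma fps_binomial_compose_split:
  assumes w: "w $$ 0 = 0"
  shows "fps_binomial (-1/2) oo w = 1 + fps_const (inv_sqrt_binom 1) * w
      + fps_const (inv_sqrt_binom 2) * w^2 + fps_const (inv_sqrt_binom 3) * w^3 + binomial_tail w"
proof (rule fps_ext)
  fix n
  define f where "f i = inv_sqrt_binom i * (w ^ i) $$ n" for i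
  have "(fps_binomial (-1/2) oo w) $$ n = (\<Sum>i\<in>{0..n}. f i)"
    by (simp add: fps_compose_nth f_def inv_sqrt_binom_def)
  also have "\<dots> = (\<Sum>i\<in>{0..n} \<union> {..<4}. f i)"
    by (rule sum.mono_neutral_left) (auto simp: f_def startsby_zero_power_prefix[OF w])
  also have "{0..n} \<union> {..<4} = {..<4} \<union> {4..n}" by auto
  also have "(\<Sum>i\<in>{..<4} \<union> {4..n}. f i) = (\<Sum>i\<in>{..<4}. f i) + (\<Sum>i\<in>{4..n}. f i)"
    by (rule sum.union_disjoint) auto
  also have "(\<Sum>i\<in>{..<4}. f i) = f 0 + f 1 + f 2 + f 3"
    by (simp add: numeral_eq_Suc lessThan_Suc)
  finally show "(fps_binomial (-1/2) oo w) $$ n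
      = (1 + fps_const (inv_sqrt_binom 1) * w + fps_const (inv_sqrt_binom 2) * w^2
          + fps_const (inv_sqrt_binom 3) * w^3 + binomial_tail w) $$ n"
    by (simp add: f_def binomial_tail_def inv_sqrt_binom_values(1))
qed

text \<open>With \<open>L = 2 A p + 2 B q\<close> and \<open>Q = p\<^sup>2 + q\<^sup>2\<close> one has
  \<open>(A + p)\<^sup>2 + (B + q)\<^sup>2 = D (1 + (L + Q) / D)\<close>; the remainder collects the terms of the
  binomial series of \<open>(1 + (L + Q) / D)\<^sup>-\<^sup>1\<^sup>/\<^sup>2\<close> of order at least four in \<open>(p, q)\<close>.\<close>
definition inv_dist_remainder :: "real \<Rightarrow> real \<Rightarrow> real \<Rightarrow> real fps \<Rightarrow> real fps \<Rightarrow> real fps" where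
  "inv_dist_remainder A B D p q = (let L = fps_const (2*A) * p + fps_const (2*B) * q; Qd = p^2 + q^2 in
     fps_const (inv_sqrt_binom 2 * (1/D)^2) * Qd^2
       + fps_const (inv_sqrt_binom 3 * (1/D)^3) * (3 * L^2 * Qd + 3 * L * Qd^2 + Qd^3)
     + binomial_tail (fps_const (1/D) * (L + Qd)))"

definition taylor3 :: "(nat \<Rightarrow> nat \<Rightarrow> real) \<Rightarrow> real fps \<Rightarrow> real fps \<Rightarrow> real fps" where
  "taylor3 w p q = fps_const (w 1 0) * p + fps_const (w 0 1) * q + fps_const (w 2 0) * p^2
     + fps_const (w 1 1) * (p * q) + fps_const (w 0 2) * q^2 + fps_const (w 3 0) * p^3
     + fps_const (w 2 1) * (p^2 * q) + fps_const (w 1 2) * (p * q^2) + fps_const (w 0 3) * q^3"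

lemma taylor3_add: "taylor3 (\<lambda>i k. a i k + b i k) p q = taylor3 a p q + taylor3 b p q"
  by (simp only: taylor3_def fps_const_arith) algebra
lemma taylor3_cmult: "taylor3 (\<lambda>i k. c * a i k) p q = fps_const c * taylor3 a p q"
  by (simp only: taylor3_def fps_const_arith) algebra
lemma taylor3_sum: "taylor3 (\<lambda>i k. \<Sum>j\<in>J. f j i k) p q = (\<Sum>j\<in>J. taylor3 (f j) p q)"
proof (induction J rule: infinite_finite_induct)
  case (infinite A) then show ?case by (simp add: taylor3_def)
next
  case empty then show ?case by (simp add: taylor3_def)
next
  case (insert x F) then show ?case using taylor3_add[of "f x" "\<lambda>i k. \<Sum>j\<in>F. f j i k" p q] by simp
qed

text \<open>The coefficient of \<open>p\<^sup>i q\<^sup>k\<close> (\<open>1 \<le> i + k \<le> 3\<close>) of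
  \<open>1 / sqrt ((A + p)\<^sup>2 + (B + q)\<^sup>2)\<close>, \<open>D = A\<^sup>2 + B\<^sup>2\<close>, read off the first three terms of the
  binomial series.\<close>
definition inv_dist_coeff :: "nat \<Rightarrow> nat \<Rightarrow> real \<Rightarrow> real \<Rightarrow> real \<Rightarrow> real" where
  "inv_dist_coeff i k A B D = (let s = 1 / sqrt D; iD = 1 / D in
     if i = 1 \<and> k = 0 then s*inv_sqrt_binom 1*iD*2*A
     else if i = 0 \<and> k = 1 then s*inv_sqrt_binom 1*iD*2*B
     else if i = 2 \<and> k = 0 then s*(inv_sqrt_binom 1*iD + inv_sqrt_binom 2*iD^2*4*A^2)
     else if i = 1 \<and> k = 1 then s*inv_sqrt_binom 2*iD^2*8*A*B
     else if i = 0 \<and> k = 2 then s*(inv_sqrt_binom 1*iD + inv_sqrt_binom 2*iD^2*4*B^2)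
     else if i = 3 \<and> k = 0 then s*(inv_sqrt_binom 2*iD^2*4*A + inv_sqrt_binom 3*iD^3*8*A^3)
     else if i = 2 \<and> k = 1 then s*(inv_sqrt_binom 2*iD^2*4*B + inv_sqrt_binom 3*iD^3*24*A^2*B)
     else if i = 1 \<and> k = 2 then s*(inv_sqrt_binom 2*iD^2*4*A + inv_sqrt_binom 3*iD^3*24*A*B^2)
     else if i = 0 \<and> k = 3 then s*(inv_sqrt_binom 2*iD^2*4*B + inv_sqrt_binom 3*iD^3*8*B^3)
     else 0)"

lemma fps_inv_sqrt_taylor3:
  assumes p0: "p $$ 0 = 0" and q0: "q $$ 0 = 0" and D: "A^2 + B^2 > 0"
  shows "fps_inv_sqrt ((fps_const A + p)^2 + (fps_const B + q)^2)
    = fps_const (1 / sqrt (A^2 + B^2)) + taylor3 (\<lambda>i k. inv_dist_coeff i k A B (A^2 + B^2)) p q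
      + fps_const (1 / sqrt (A^2 + B^2)) * inv_dist_remainder A B (A^2 + B^2) p q"
proof -
  define D' where "D' = A^2 + B^2"
  define s where "s = 1 / sqrt D'"
  define iD where "iD = 1 / D'"
  define L where "L = fps_const (2*A) * p + fps_const (2*B) * q"
  define Qd where "Qd = p^2 + q^2"
  define F where "F = (fps_const A + p)^2 + (fps_const B + q)^2"
  define w where "w = fps_const iD * (L + Qd)"
  have F_eq: "F = fps_const D' + (L + Qd)"
    unfolding F_def D'_def L_def Qd_def by (simp only: fps_const_arith) algebra
  have F0: "F $$ 0 = D'" using p0 q0 by (simp add: F_def D'_def fps_nth_power_0)
  have Dp: "D' > 0" using D by (simp add: D'_def)
  have w_eq: "fps_const (1 / D') * F - 1 = w"
  proof -
    have h: "fps_const iD * fps_const D' - 1 = 0" using Dp by (simp add: iD_def)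
    have "fps_const (1 / D') * F - 1 = fps_const iD * (fps_const D' + (L + Qd)) - 1"
      by (simp only: F_eq iD_def)
    also have "\<dots> = (fps_const iD * fps_const D' - 1) + fps_const iD * (L + Qd)" by algebra
    finally show ?thesis by (simp only: h w_def add_0)
  qed
  have w0: "w $$ 0 = 0" using p0 q0 by (simp add: w_def L_def Qd_def fps_nth_power_0)
  have "fps_inv_sqrt F
      = fps_const s * (1 + fps_const (inv_sqrt_binom 1) * w + fps_const (inv_sqrt_binom 2) * w^2
          + fps_const (inv_sqrt_binom 3) * w^3 + binomial_tail w)"
    by (simp only: fps_inv_sqrt_def F0 w_eq fps_binomial_compose_split[OF w0] s_def)
  also have "\<dots> = fps_const s + taylor3 (\<lambda>i k. inv_dist_coeff i k A B D') p q
      + fps_const s * (fps_const (inv_sqrt_binom 2 * iD^2) * Qd^2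
          + fps_const (inv_sqrt_binom 3 * iD^3) * (3 * L^2 * Qd + 3 * L * Qd^2 + Qd^3)
     + binomial_tail w)"
    unfolding taylor3_def inv_dist_coeff_def w_def L_def Qd_def Let_def s_def[symmetric] iD_def[symmetric]
    by (simp only: fps_const_arith if_True if_False simp_thms zero_neq_one one_neq_zero
        zero_neq_numeral numeral_eq_iff numeral_One[symmetric] one_eq_numeral_iff
        numeral_eq_one_iff semiring_norm) algebra
  finally show ?thesis
    unfolding F_def inv_dist_remainder_def Let_def s_def D'_def iD_def w_def L_def Qd_def by simp
qed

lemma binomial_tail_perturbation:
  assumes "perturbation k N w w'" "1 \<le> k" "k \<le> N"
    shows "vanishes_to (3 * k + N) (binomial_tail w' - binomial_tail w)"
  unfolding vanishes_to_def
proof (intro allI impI)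
  fix n assume n: "n < 3 * k + N"
  have "\<And>i. i \<in> {4..n} \<Longrightarrow> (w' ^ i) $$ n - (w ^ i) $$ n = 0"
  proof -
    fix i assume i: "i \<in> {4..n}"
    have "perturbation (i * k) ((i - 1) * k + N) (w ^ i) (w' ^ i)" using assms(1,3) i
      by (intro perturbation_power) auto
    then have "vanishes_to ((i - 1) * k + N) (w' ^ i - w ^ i)" by (simp add: perturbation_def)
    moreover have "3 * k \<le> (i - 1) * k" using i by (intro mult_le_mono1) auto
    moreover have "n < (i - 1) * k + N" using n \<open>3 * k \<le> (i - 1) * k\<close> by linarith
    ultimately show "(w' ^ i) $$ n - (w ^ i) $$ n = 0" by (simp add: vanishes_to_def)
  qed
  then have "(\<Sum>i\<in>{4..n}. inv_sqrt_binom i * (w' ^ i) $$ n)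
      - (\<Sum>i\<in>{4..n}. inv_sqrt_binom i * (w ^ i) $$ n) = 0"
    by (simp add: sum_subtractf[symmetric] right_diff_distrib[symmetric])
  then show "(binomial_tail w' - binomial_tail w) $$ n = 0" by (simp add: binomial_tail_def)
qed

lemma perturbation_remainder_polynomial:
  fixes L L' Q Q' :: "real fps"
  assumes L: "perturbation k N L L'" and Q: "perturbation (2 * k) (k + N) Q Q'" and "k \<le> N"
  shows "perturbation (4 * k) (3 * k + N)
    (fps_const \<alpha> * Q^2 + fps_const \<beta> * (3 * L^2 * Q + 3 * L * Q^2 + Q^3))
    (fps_const \<alpha> * Q'^2 + fps_const \<beta> * (3 * L'^2 * Q' + 3 * L' * Q'^2 + Q'^3))"
proof -
  have L2: "perturbation (2 * k) (k + N) (L^2) (L'^2)" unfolding power2_eq_square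
    using perturbation_mult[OF L L] by (simp add: mult_2 add.commute)
  have Q2: "perturbation (4 * k) (3 * k + N) (Q^2) (Q'^2)" unfolding power2_eq_square
    using perturbation_mult[OF Q Q] by (rule perturbation_mono) auto
  have "perturbation (4 * k) (3 * k + N) (3 * L^2 * Q) (3 * L'^2 * Q')"
    using perturbation_mult[OF perturbation_mult[OF perturbation_same[of N] L2] Q]
    by (rule perturbation_mono) auto
  moreover have "perturbation (4 * k) (3 * k + N) (3 * L * Q^2) (3 * L' * Q'^2)"
    using perturbation_mult[OF perturbation_mult[OF perturbation_same[of N] L] Q2]
    by (rule perturbation_mono) auto
  moreover have "perturbation (4 * k) (3 * k + N) (Q^3) (Q'^3)" unfolding power3_eq_cube
    using perturbation_mult[OF perturbation_mult[OF Q Q] Q] by (rule perturbation_mono) auto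
  ultimately show ?thesis by (intro perturbation_add perturbation_cmult Q2)
qed

lemma inv_dist_remainder_perturbation:
  assumes p: "perturbation k N p p'" and q: "perturbation k N q q'" and k: "1 \<le> k" "k \<le> N"
  shows "vanishes_to (3 * k + N) (inv_dist_remainder A B D p' q' - inv_dist_remainder A B D p q)"
proof -
  define L where "L = fps_const (2*A) * p + fps_const (2*B) * q"
  define Q where "Q = p^2 + q^2"
  define L' where "L' = fps_const (2*A) * p' + fps_const (2*B) * q'"
  define Q' where "Q' = p'^2 + q'^2"
  have L: "perturbation k N L L'" unfolding L_def L'_def using p q
    by (intro perturbation_add perturbation_cmult)
  have Q: "perturbation (2 * k) (k + N) Q Q'" unfolding Q_def Q'_def power2_eq_square
    using perturbation_mult[OF p p] perturbation_mult[OF q q]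
    by (intro perturbation_add) (auto simp: mult_2 add.commute)
  from perturbation_remainder_polynomial[OF L Q k(2),
      of "inv_sqrt_binom 2 * (1/D)^2" "inv_sqrt_binom 3 * (1/D)^3"]
  have poly: "vanishes_to (3 * k + N)
    ((fps_const (inv_sqrt_binom 2 * (1/D)^2) * Q'^2
       + fps_const (inv_sqrt_binom 3 * (1/D)^3) * (3 * L'^2 * Q' + 3 * L' * Q'^2 + Q'^3))
     - (fps_const (inv_sqrt_binom 2 * (1/D)^2) * Q^2
       + fps_const (inv_sqrt_binom 3 * (1/D)^3) * (3 * L^2 * Q + 3 * L * Q^2 + Q^3)))"
    by (simp add: perturbation_def)
  have "perturbation k N (fps_const (1/D) * (L + Q)) (fps_const (1/D) * (L' + Q'))"
    by (intro perturbation_cmult perturbation_add L) (rule perturbation_mono[OF Q], auto)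
  from vanishes_to_add[OF poly binomial_tail_perturbation[OF this k]] show ?thesis
    unfolding inv_dist_remainder_def Let_def L_def[symmetric] Q_def[symmetric] L'_def[symmetric]
      Q'_def[symmetric]
    by (simp add: algebra_simps)
qed

lemma inv_dist_remainder_0: "inv_dist_remainder A B D 0 0 = 0"
  by (rule fps_ext) (simp add: inv_dist_remainder_def binomial_tail_def zero_power)

lemma vanishes_to_inv_dist_remainder:
  assumes "vanishes_to k p" "vanishes_to k q" "1 \<le> k"
  shows "vanishes_to (4 * k) (inv_dist_remainder A B D p q)"
proof -
  have "perturbation k k 0 p" "perturbation k k 0 q" using assms by (simp_all add: perturbation_def)
  from inv_dist_remainder_perturbation[OF this] show ?thesis
    using assms(3) by (simp add: inv_dist_remainder_0)
qed

definition centrifugal_coeff :: "real \<Rightarrow> real \<Rightarrow> nat \<Rightarrow> nat \<Rightarrow> real" where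
  "centrifugal_coeff x0 y0 i k = (if i = 1 \<and> k = 0 then x0 else if i = 0 \<and> k = 1 then y0
     else if (i = 2 \<and> k = 0) \<or> (i = 0 \<and> k = 2) then 1/2 else 0)"

definition omega_coeff ::
    "(nat \<Rightarrow> real) \<Rightarrow> (nat \<Rightarrow> real) \<Rightarrow> (nat \<Rightarrow> real) \<Rightarrow> real \<Rightarrow> real \<Rightarrow> nat \<Rightarrow> nat \<Rightarrow> real" where
  "omega_coeff m px py x0 y0 i k = centrifugal_coeff x0 y0 i k
     + (\<Sum>j\<in>{1,2,3}. m j *
          inv_dist_coeff i k (x0 - px j) (y0 - py j) ((x0 - px j)^2 + (y0 - py j)^2))"

definition jacobi_Lc :: "(nat \<Rightarrow> real) \<Rightarrow> (nat \<Rightarrow> real) \<Rightarrow> (nat \<Rightarrow> real) \<Rightarrow> real \<Rightarrow> real \<Rightarrow> real" where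
  "jacobi_Lc m px py x0 y0 = x0^2 + y0^2
      + 2 * (\<Sum>j\<in>{1,2,3}. m j * (1 / sqrt ((x0 - px j)^2 + (y0 - py j)^2)))"

lemma fps_const_sum: "fps_const (\<Sum>j\<in>J. f j) = (\<Sum>j\<in>J. fps_const (f j))"
  by (induction J rule: infinite_finite_induct) (simp_all add: fps_const_add[symmetric])

lemma fps_const_half_mult_2: "fps_const (1/2 :: real) * 2 = 1"
  by (simp add: numeral_fps_const)

lemma centrifugal_taylor: "fps_const (1/2) * ((fps_const x0 + p)^2 + (fps_const y0 + q)^2)
   = fps_const (1/2) * (fps_const x0 ^ 2 + fps_const y0 ^ 2)
     + taylor3 (centrifugal_coeff x0 y0) p q"
proof -
  have "taylor3 (centrifugal_coeff x0 y0) p q = fps_const x0 * p + fps_const y0 * q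
      + fps_const (1/2) * p^2 + fps_const (1/2) * q^2"
    by (simp add: taylor3_def centrifugal_coeff_def)
  then show ?thesis using fps_const_half_mult_2 by (simp only:) algebra
qed

definition omega_remainder ::
    "(nat \<Rightarrow> real) \<Rightarrow> (nat \<Rightarrow> real) \<Rightarrow> (nat \<Rightarrow> real) \<Rightarrow> real \<Rightarrow> real \<Rightarrow> real fps \<Rightarrow> real fps \<Rightarrow> real fps" where
  "omega_remainder m px py x0 y0 p q = (\<Sum>j\<in>{1,2,3}.
     fps_const (m j * (1 / sqrt ((x0 - px j)^2 + (y0 - py j)^2))) *
     inv_dist_remainder (x0 - px j) (y0 - py j) ((x0 - px j)^2 + (y0 - py j)^2) p q)"

lemma vanishes_to_omega_remainder:
  "vanishes_to k p \<Longrightarrow> vanishes_to k q \<Longrightarrow> 1 \<le> k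
      \<Longrightarrow> vanishes_to (4 * k) (omega_remainder m px py x0 y0 p q)"
  unfolding omega_remainder_def
  by (intro vanishes_to_sum vanishes_to_cmult vanishes_to_inv_dist_remainder)

lemma omega_remainder_perturbation:
  assumes "perturbation k N p p'" "perturbation k N q q'" "1 \<le> k" "k \<le> N"
  shows "vanishes_to (3 * k + N)
    (omega_remainder m px py x0 y0 p' q' - omega_remainder m px py x0 y0 p q)"
  unfolding omega_remainder_def
  by (simp only: flip: sum_subtractf right_diff_distrib)
     (intro vanishes_to_sum vanishes_to_cmult inv_dist_remainder_perturbation assms)

lemma sum_inv_dist_taylor3:
  assumes p0: "p $$ 0 = 0" and q0: "q $$ 0 = 0"
    and D: "\<And>j. j \<in> {1,2,3} \<Longrightarrow> (x0 - px j)^2 + (y0 - py j)^2 > 0"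
  shows "(\<Sum>j\<in>{1,2,3}. fps_const (m j) *
      fps_inv_sqrt ((fps_const x0 + p - fps_const (px j))^2
          + (fps_const y0 + q - fps_const (py j))^2))
    = fps_const (\<Sum>j\<in>{1,2,3}. m j * (1 / sqrt ((x0 - px j)^2 + (y0 - py j)^2)))
      + taylor3
          (\<lambda>i k. \<Sum>j\<in>{1,2,3}. m j * inv_dist_coeff i k (x0 - px j) (y0 - py j)
              ((x0 - px j)^2 + (y0 - py j)^2)) p q
      + omega_remainder m px py x0 y0 p q"
proof -
  define A where "A j = x0 - px j" for j
  define B where "B j = y0 - py j" for j
  define Dj where "Dj j = (x0 - px j)^2 + (y0 - py j)^2" for j
  define s where "s j = 1 / sqrt (Dj j)" for j
  define W where "W j = (\<lambda>i k. inv_dist_coeff i k (A j) (B j) (Dj j))" for j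
  define R where "R j = inv_dist_remainder (A j) (B j) (Dj j) p q" for j
  have inv: "fps_inv_sqrt ((fps_const x0 + p - fps_const (px j))^2 + (fps_const y0 + q - fps_const (py j))^2)
      = fps_const (s j) + taylor3 (W j) p q + fps_const (s j) * R j" if j: "j \<in> {1,2,3}" for j
  proof -
    have e1: "fps_const x0 + p - fps_const (px j) = fps_const (A j) + p"
      and e2: "fps_const y0 + q - fps_const (py j) = fps_const (B j) + q"
      by (simp_all add: A_def B_def fps_const_sub[symmetric] algebra_simps del: fps_const_sub)
    have Dp: "(A j)^2 + (B j)^2 > 0" using D[OF j] by (simp add: A_def B_def)
    show ?thesis unfolding e1 e2 fps_inv_sqrt_taylor3[OF p0 q0 Dp]
      by (simp add: s_def W_def R_def Dj_def A_def B_def)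
  qed
  have "(\<Sum>j\<in>{1,2,3}. fps_const (m j) *
      fps_inv_sqrt ((fps_const x0 + p - fps_const (px j))^2
          + (fps_const y0 + q - fps_const (py j))^2))
     = (\<Sum>j\<in>{1,2,3}. fps_const (m j) * (fps_const (s j) + taylor3 (W j) p q + fps_const (s j) * R j))"
    by (rule sum.cong) (simp_all add: inv)
  also have "\<dots> = (\<Sum>j\<in>{1,2,3}. fps_const (m j * s j))
      + (\<Sum>j\<in>{1,2,3}. taylor3 (\<lambda>i k. m j * W j i k) p q)
      + (\<Sum>j\<in>{1,2,3}. fps_const (m j * s j) * R j)"
    by (simp add: sum.distrib distrib_left taylor3_cmult mult.assoc[symmetric])
  also have "(\<Sum>j\<in>{1,2,3}. taylor3 (\<lambda>i k. m j * W j i k) p q)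
      = taylor3 (\<lambda>i k. \<Sum>j\<in>{1,2,3}. m j * W j i k) p q"
    by (rule taylor3_sum[symmetric])
  finally show ?thesis
    by (simp only: fps_const_sum)
      (simp add: omega_remainder_def s_def W_def R_def A_def B_def Dj_def)
qed

lemma jacobi_fps_taylor3:
  assumes "p1 $$ 0 = 0" "p3 $$ 0 = 0" "\<And>j. j \<in> {1,2,3} \<Longrightarrow> (x0 - px j)^2 + (y0 - py j)^2 > 0"
  shows "jacobi_fps m px py x0 y0 p1 p2 p3 p4 = fps_const (jacobi_Lc m px py x0 y0) - (p2^2 + p4^2)
     + 2 * taylor3 (omega_coeff m px py x0 y0) p1 p3 + 2 * omega_remainder m px py x0 y0 p1 p3"
proof -
  have "taylor3 (omega_coeff m px py x0 y0) p1 p3 = taylor3 (centrifugal_coeff x0 y0) p1 p3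
      + taylor3
          (\<lambda>i k. \<Sum>j\<in>{1,2,3}. m j * inv_dist_coeff i k (x0 - px j) (y0 - py j)
              ((x0 - px j)^2 + (y0 - py j)^2)) p1 p3"
  proof -
    have "omega_coeff m px py x0 y0 = (\<lambda>i k. centrifugal_coeff x0 y0 i k
      + (\<Sum>j\<in>{1,2,3}. m j * inv_dist_coeff i k (x0 - px j) (y0 - py j) ((x0 - px j)^2 + (y0 - py j)^2)))"
      by (simp add: omega_coeff_def fun_eq_iff)
    then show ?thesis by (simp only: taylor3_add)
  qed
  moreover have "fps_const (jacobi_Lc m px py x0 y0) = fps_const x0 ^ 2 + fps_const y0 ^ 2
      + 2 * fps_const (\<Sum>j\<in>{1,2,3}. m j * (1 / sqrt ((x0 - px j)^2 + (y0 - py j)^2)))"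
    unfolding jacobi_Lc_def by (simp only: fps_const_arith)
  moreover note sum_inv_dist_taylor3[where px = px and py = py and m = m, OF assms]
  ultimately show ?thesis
    unfolding jacobi_fps_def centrifugal_taylor using fps_const_half_mult_2 by algebra
qed

subsection \<open>Partial derivatives of the effective potential\<close>

definition inv_dist_pow :: "real \<Rightarrow> real \<Rightarrow> nat \<Rightarrow> real \<Rightarrow> real \<Rightarrow> real" where
  "inv_dist_pow a b k x y = (1 / sqrt ((x - a)^2 + (y - b)^2)) ^ k"

lemma inv_dist_pow_deriv_y:
  assumes S: "(x - a)^2 + (y - b)^2 > 0"
  shows "((\<lambda>y. inv_dist_pow a b k x y) has_real_derivative
    - real k * (y - b) * inv_dist_pow a b (k + 2) x y) (at y)"
proof -
  define r where "r = sqrt ((x - a)^2 + (y - b)^2)"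
  have r: "r > 0" using S by (simp add: r_def)
  have d1: "((\<lambda>y. (x - a)^2 + (y - b)^2) has_real_derivative 2 * (y - b)) (at y)"
    by (auto intro!: derivative_eq_intros)
  have d2: "((\<lambda>y. sqrt ((x - a)^2 + (y - b)^2)) has_real_derivative
      inverse (sqrt ((x - a)^2 + (y - b)^2)) / 2 * (2 * (y - b))) (at y)"
    by (rule DERIV_chain2[OF DERIV_real_sqrt[OF S] d1])
  have nz: "sqrt ((x - a)^2 + (y - b)^2) \<noteq> 0" using S
    by (metis less_irrefl real_sqrt_eq_zero_cancel_iff)
  note d = DERIV_power[OF DERIV_inverse_fun[OF d2 nz], of k, unfolded inverse_eq_divide]
  show ?thesis unfolding inv_dist_pow_def
    by (rule DERIV_cong[OF d], unfold r_def[symmetric])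
      (use r in \<open>cases k, simp_all add: field_simps power_add power2_eq_square\<close>)
qed

lemma inv_dist_pow_deriv_x:
  assumes "(x - a)^2 + (y - b)^2 > 0"
  shows "((\<lambda>x. inv_dist_pow a b k x y) has_real_derivative
    - real k * (x - a) * inv_dist_pow a b (k + 2) x y) (at x)"
proof -
  have "inv_dist_pow a b k x y = inv_dist_pow b a k y x" for k x y
    by (simp add: inv_dist_pow_def add.commute)
  with inv_dist_pow_deriv_y[of y b x a k] assms show ?thesis
    by (simp add: add.commute)
qed

lemma deriv_eqI_open:
  assumes "open U" "y \<in> U" "\<And>z. z \<in> U \<Longrightarrow> f z = F z" "(F has_real_derivative F') (at y)"
  shows "deriv f y = F'"
  by (rule DERIV_imp_deriv, rule has_field_derivative_transform_within_open[OF assms(4) assms(1,2)])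
     (simp add: assms(3))

definition off_primaries :: "(nat \<Rightarrow> real) \<Rightarrow> (nat \<Rightarrow> real) \<Rightarrow> real \<Rightarrow> real \<Rightarrow> bool" where
  "off_primaries px py x y \<longleftrightarrow> (\<forall>j\<in>{1,2,3}. 0 < (x - px j)^2 + (y - py j)^2)"

lemma open_off_primaries: "open {y. off_primaries px py x y}" "open {x. off_primaries px py x y}"
  by (simp_all add: off_primaries_def)
     (intro open_Collect_conj open_Collect_less continuous_intros)+

context
  fixes m px py :: "nat \<Rightarrow> real"
begin

definition "Omega_x x y = x - (\<Sum>j\<in>{1,2,3}. m j * ((x - px j) * inv_dist_pow (px j) (py j) 3 x y))"
definition "Omega_y x y = y - (\<Sum>j\<in>{1,2,3}. m j * ((y - py j) * inv_dist_pow (px j) (py j) 3 x y))"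
definition "Omega_xx x y = 1 - (\<Sum>j\<in>{1,2,3}. m j *
  (inv_dist_pow (px j) (py j) 3 x y - 3 * (x - px j)^2 * inv_dist_pow (px j) (py j) 5 x y))"
definition "Omega_xy x y = (\<Sum>j\<in>{1,2,3}. m j *
  (3 * (y - py j) * (x - px j) * inv_dist_pow (px j) (py j) 5 x y))"
definition "Omega_yy x y = 1 - (\<Sum>j\<in>{1,2,3}. m j *
  (inv_dist_pow (px j) (py j) 3 x y - 3 * (y - py j)^2 * inv_dist_pow (px j) (py j) 5 x y))"
definition "Omega_xxx x y = (\<Sum>j\<in>{1,2,3}. m j *
  (9 * (x - px j) * inv_dist_pow (px j) (py j) 5 x y
      - 15 * (x - px j)^3 * inv_dist_pow (px j) (py j) 7 x y))"
definition "Omega_xxy x y = (\<Sum>j\<in>{1,2,3}. m j *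
  (3 * (y - py j) *
      (inv_dist_pow (px j) (py j) 5 x y - 5 * (x - px j)^2 * inv_dist_pow (px j) (py j) 7 x y)))"
definition "Omega_xyy x y = (\<Sum>j\<in>{1,2,3}. m j *
  (3 * (x - px j) * inv_dist_pow (px j) (py j) 5 x y
      - 15 * (y - py j)^2 * (x - px j) * inv_dist_pow (px j) (py j) 7 x y))"
definition "Omega_yyy x y = (\<Sum>j\<in>{1,2,3}. m j *
  (9 * (y - py j) * inv_dist_pow (px j) (py j) 5 x y
      - 15 * (y - py j)^3 * inv_dist_pow (px j) (py j) 7 x y))"

end

context
  fixes a b x y :: real
  assumes pos: "(x - a)^2 + (y - b)^2 > 0"
begin

lemma Omega_term_x:
  "((\<lambda>x. inv_dist_pow a b 1 x y) has_real_derivative - ((x - a) * inv_dist_pow a b 3 x y)) (at x)"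
  by (rule DERIV_cong[OF inv_dist_pow_deriv_x[OF pos]]) (simp add: eval_nat_numeral algebra_simps)

lemma Omega_term_y:
  "((\<lambda>y. inv_dist_pow a b 1 x y) has_real_derivative - ((y - b) * inv_dist_pow a b 3 x y)) (at y)"
  by (rule DERIV_cong[OF inv_dist_pow_deriv_y[OF pos]]) (simp add: eval_nat_numeral algebra_simps)

lemma Omega_x_term_x:
  "((\<lambda>x. (x - a) * inv_dist_pow a b 3 x y) has_real_derivative
    inv_dist_pow a b 3 x y - 3 * (x - a)^2 * inv_dist_pow a b 5 x y) (at x)"
  by (rule DERIV_cong[OF DERIV_mult'[OF DERIV_diff[OF DERIV_ident DERIV_const] inv_dist_pow_deriv_x[OF pos]]])
    (simp add: algebra_simps power2_eq_square)

lemma Omega_y_term_y: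
  "((\<lambda>y. (y - b) * inv_dist_pow a b 3 x y) has_real_derivative
    inv_dist_pow a b 3 x y - 3 * (y - b)^2 * inv_dist_pow a b 5 x y) (at y)"
  by (rule DERIV_cong[OF DERIV_mult'[OF DERIV_diff[OF DERIV_ident DERIV_const] inv_dist_pow_deriv_y[OF pos]]])
    (simp add: algebra_simps power2_eq_square)

lemma Omega_y_term_x:
  "((\<lambda>x. (y - b) * inv_dist_pow a b 3 x y) has_real_derivative
    - (3 * (y - b) * (x - a) * inv_dist_pow a b 5 x y)) (at x)"
  by (rule DERIV_cong[OF DERIV_cmult[OF inv_dist_pow_deriv_x[OF pos]]]) (simp add: algebra_simps)

lemma Omega_xx_term_x:
  "((\<lambda>x. inv_dist_pow a b 3 x y - 3 * (x - a)^2 * inv_dist_pow a b 5 x y) has_real_derivative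
    - (9 * (x - a) * inv_dist_pow a b 5 x y - 15 * (x - a)^3 * inv_dist_pow a b 7 x y)) (at x)"
  by (rule DERIV_cong[OF DERIV_diff[OF inv_dist_pow_deriv_x[OF pos]
        DERIV_mult'[OF DERIV_cmult[OF DERIV_power[OF DERIV_diff[OF DERIV_ident DERIV_const]]]
            inv_dist_pow_deriv_x[OF pos]]]])
    (simp add: algebra_simps power2_eq_square power3_eq_cube)

lemma Omega_yy_term_y:
  "((\<lambda>y. inv_dist_pow a b 3 x y - 3 * (y - b)^2 * inv_dist_pow a b 5 x y) has_real_derivative
    - (9 * (y - b) * inv_dist_pow a b 5 x y - 15 * (y - b)^3 * inv_dist_pow a b 7 x y)) (at y)"
  by (rule DERIV_cong[OF DERIV_diff[OF inv_dist_pow_deriv_y[OF pos]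
        DERIV_mult'[OF DERIV_cmult[OF DERIV_power[OF DERIV_diff[OF DERIV_ident DERIV_const]]]
            inv_dist_pow_deriv_y[OF pos]]]])
    (simp add: algebra_simps power2_eq_square power3_eq_cube)

lemma Omega_xy_term_x:
  "((\<lambda>x. 3 * (y - b) * (x - a) * inv_dist_pow a b 5 x y) has_real_derivative
    3 * (y - b) * (inv_dist_pow a b 5 x y - 5 * (x - a)^2 * inv_dist_pow a b 7 x y)) (at x)"
  by (rule DERIV_cong[OF DERIV_mult'[OF DERIV_cmult[OF DERIV_diff[OF DERIV_ident DERIV_const]]
      inv_dist_pow_deriv_x[OF pos]]])
    (simp add: algebra_simps power2_eq_square)

lemma Omega_yy_term_x:
  "((\<lambda>x. inv_dist_pow a b 3 x y - 3 * (y - b)^2 * inv_dist_pow a b 5 x y) has_real_derivative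
    - (3 * (x - a) * inv_dist_pow a b 5 x y
        - 15 * (y - b)^2 * (x - a) * inv_dist_pow a b 7 x y)) (at x)"
  by (rule DERIV_cong[OF DERIV_diff[OF inv_dist_pow_deriv_x[OF pos]
      DERIV_cmult[OF inv_dist_pow_deriv_x[OF pos]]]]) (simp add: algebra_simps)

end

lemma Omega_inv_dist_pow:
  "Omega m px py x y = (x^2 + y^2) / 2 + (\<Sum>j\<in>{1,2,3}. m j * inv_dist_pow (px j) (py j) 1 x y)"
  by (simp add: Omega_def inv_dist_pow_def)

context
  fixes m px py :: "nat \<Rightarrow> real" and x y :: real
  assumes off: "off_primaries px py x y"
begin

lemma dist_pos: "j \<in> {1,2,3} \<Longrightarrow> (x - px j)^2 + (y - py j)^2 > 0"
  using off by (auto simp: off_primaries_def)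

lemma has_real_derivative_weighted_sum:
  "(\<And>j. j \<in> {1,2,3} \<Longrightarrow> ((\<lambda>z. f j z) has_real_derivative f' j) (at z)) \<Longrightarrow>
   ((\<lambda>z. \<Sum>j\<in>{1,2,3::nat}. m j * f j z) has_real_derivative (\<Sum>j\<in>{1,2,3}. m j * f' j)) (at z)"
  by (rule DERIV_sum) (rule DERIV_cmult, auto)

lemma has_real_derivative_Omega_x:
  "((\<lambda>x. Omega m px py x y) has_real_derivative Omega_x m px py x y) (at x)"
proof -
  have "((\<lambda>x. \<Sum>j\<in>{1,2,3}. m j * inv_dist_pow (px j) (py j) 1 x y) has_real_derivative
      (\<Sum>j\<in>{1,2,3}. m j * - ((x - px j) * inv_dist_pow (px j) (py j) 3 x y))) (at x)"
    by (rule has_real_derivative_weighted_sum) (rule Omega_term_x, rule dist_pos)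
  moreover have "((\<lambda>x. (x^2 + y^2) / 2) has_real_derivative x) (at x)"
    by (auto intro!: derivative_eq_intros)
  ultimately show ?thesis unfolding Omega_inv_dist_pow
    by (rule DERIV_cong[OF DERIV_add[rotated]]) (simp add: Omega_x_def sum_negf)
qed

lemma has_real_derivative_Omega_y:
  "((\<lambda>y. Omega m px py x y) has_real_derivative Omega_y m px py x y) (at y)"
proof -
  have "((\<lambda>y. \<Sum>j\<in>{1,2,3}. m j * inv_dist_pow (px j) (py j) 1 x y) has_real_derivative
      (\<Sum>j\<in>{1,2,3}. m j * - ((y - py j) * inv_dist_pow (px j) (py j) 3 x y))) (at y)"
    by (rule has_real_derivative_weighted_sum) (rule Omega_term_y, rule dist_pos)
  moreover have "((\<lambda>y. (x^2 + y^2) / 2) has_real_derivative y) (at y)"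
    by (auto intro!: derivative_eq_intros)
  ultimately show ?thesis unfolding Omega_inv_dist_pow
    by (rule DERIV_cong[OF DERIV_add[rotated]]) (simp add: Omega_y_def sum_negf)
qed

lemma has_real_derivative_Omega_xx:
  "((\<lambda>x. Omega_x m px py x y) has_real_derivative Omega_xx m px py x y) (at x)"
  unfolding Omega_x_def Omega_xx_def
  by (rule DERIV_diff[OF DERIV_ident
        has_real_derivative_weighted_sum[OF Omega_x_term_x[OF dist_pos]]])

lemma has_real_derivative_Omega_yy:
  "((\<lambda>y. Omega_y m px py x y) has_real_derivative Omega_yy m px py x y) (at y)"
  unfolding Omega_y_def Omega_yy_def
  by (rule DERIV_diff[OF DERIV_ident
        has_real_derivative_weighted_sum[OF Omega_y_term_y[OF dist_pos]]])

lemma has_real_derivative_Omega_xy: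
  "((\<lambda>x. Omega_y m px py x y) has_real_derivative Omega_xy m px py x y) (at x)"
  unfolding Omega_y_def Omega_xy_def
  by (rule DERIV_cong[OF DERIV_diff[OF DERIV_const
        has_real_derivative_weighted_sum[OF Omega_y_term_x[OF dist_pos]]]])
     (simp_all only: sum_negf mult_minus_right diff_0 minus_minus)

lemma has_real_derivative_Omega_xxx:
  "((\<lambda>x. Omega_xx m px py x y) has_real_derivative Omega_xxx m px py x y) (at x)"
  unfolding Omega_xx_def Omega_xxx_def
  by (rule DERIV_cong[OF DERIV_diff[OF DERIV_const
        has_real_derivative_weighted_sum[OF Omega_xx_term_x[OF dist_pos]]]])
     (simp_all only: sum_negf mult_minus_right diff_0 minus_minus)

lemma has_real_derivative_Omega_xxy:
  "((\<lambda>x. Omega_xy m px py x y) has_real_derivative Omega_xxy m px py x y) (at x)"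
  unfolding Omega_xy_def Omega_xxy_def
  by (rule has_real_derivative_weighted_sum[OF Omega_xy_term_x[OF dist_pos]])

lemma has_real_derivative_Omega_xyy:
  "((\<lambda>x. Omega_yy m px py x y) has_real_derivative Omega_xyy m px py x y) (at x)"
  unfolding Omega_yy_def Omega_xyy_def
  by (rule DERIV_cong[OF DERIV_diff[OF DERIV_const
        has_real_derivative_weighted_sum[OF Omega_yy_term_x[OF dist_pos]]]])
     (simp_all only: sum_negf mult_minus_right diff_0 minus_minus)

lemma has_real_derivative_Omega_yyy:
  "((\<lambda>y. Omega_yy m px py x y) has_real_derivative Omega_yyy m px py x y) (at y)"
  unfolding Omega_yy_def Omega_yyy_def
  by (rule DERIV_cong[OF DERIV_diff[OF DERIV_const
        has_real_derivative_weighted_sum[OF Omega_yy_term_y[OF dist_pos]]]])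
     (simp_all only: sum_negf mult_minus_right diff_0 minus_minus)

end

lemma deriv_y_Omega: "off_primaries px py x z \<Longrightarrow> deriv (\<lambda>y. Omega m px py x y) z
    = Omega_y m px py x z"
  and deriv2_y_Omega: "off_primaries px py x z \<Longrightarrow> deriv (deriv (\<lambda>y. Omega m px py x y)) z
      = Omega_yy m px py x z"
  and deriv3_y_Omega: "off_primaries px py x z \<Longrightarrow> deriv (deriv (deriv (\<lambda>y. Omega m px py x y))) z
      = Omega_yyy m px py x z"
proof -
  show 1: "deriv (\<lambda>y. Omega m px py x y) z = Omega_y m px py x z" if "off_primaries px py x z" for z
    by (rule deriv_eqI_open[OF open_off_primaries(1)])
      (use that in \<open>auto intro: has_real_derivative_Omega_y\<close>)
  show 2: "deriv (deriv (\<lambda>y. Omega m px py x y)) z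
      = Omega_yy m px py x z" if "off_primaries px py x z" for z
    by (rule deriv_eqI_open[OF open_off_primaries(1), where F = "Omega_y m px py x"])
       (use that in \<open>auto simp: 1 intro: has_real_derivative_Omega_yy\<close>)
  show "deriv (deriv (deriv (\<lambda>y. Omega m px py x y))) z
      = Omega_yyy m px py x z" if "off_primaries px py x z"
    by (rule deriv_eqI_open[OF open_off_primaries(1), where F = "Omega_yy m px py x"])
       (use that in \<open>auto simp: 2 intro: has_real_derivative_Omega_yyy\<close>)
qed

lemma pd_Omega:
  fixes m px py :: "nat \<Rightarrow> real"
  assumes "off_primaries px py x0 y0"
  defines "Om \<equiv> Omega m px py"
  shows "pd 1 0 Om x0 y0 = Omega_x m px py x0 y0" "pd 0 1 Om x0 y0 = Omega_y m px py x0 y0"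
    "pd 2 0 Om x0 y0 = Omega_xx m px py x0 y0" "pd 1 1 Om x0 y0 = Omega_xy m px py x0 y0"
    "pd 0 2 Om x0 y0 = Omega_yy m px py x0 y0" "pd 3 0 Om x0 y0 = Omega_xxx m px py x0 y0"
    "pd 2 1 Om x0 y0 = Omega_xxy m px py x0 y0" "pd 1 2 Om x0 y0 = Omega_xyy m px py x0 y0"
    "pd 0 3 Om x0 y0 = Omega_yyy m px py x0 y0"
proof -
  let ?V = "{x. off_primaries px py x y0}"
  note eqI = deriv_eqI_open[OF open_off_primaries(2)]
  have y1: "deriv (\<lambda>y. Om x y) y0 = Omega_y m px py x y0"
    and y2: "deriv (deriv (\<lambda>y. Om x y)) y0 = Omega_yy m px py x y0"
    and y3: "deriv (deriv (deriv (\<lambda>y. Om x y))) y0 = Omega_yyy m px py x y0" if "x \<in> ?V" for x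
    using that by (simp_all add: Om_def deriv_y_Omega deriv2_y_Omega deriv3_y_Omega)
  have x1: "deriv (\<lambda>x. Om x y0) x = Omega_x m px py x y0" if "x \<in> ?V" for x
    by (rule eqI) (use that in \<open>auto simp: Om_def intro: has_real_derivative_Omega_x\<close>)
  have x2: "deriv (deriv (\<lambda>x. Om x y0)) x = Omega_xx m px py x y0" if "x \<in> ?V" for x
    by (rule eqI[where F = "\<lambda>x. Omega_x m px py x y0"])
      (use that in \<open>auto simp: x1 intro: has_real_derivative_Omega_xx\<close>)
  have x3: "deriv (deriv (deriv (\<lambda>x. Om x y0))) x = Omega_xxx m px py x y0" if "x \<in> ?V" for x
    by (rule eqI[where F = "\<lambda>x. Omega_xx m px py x y0"])
      (use that in \<open>auto simp: x2 intro: has_real_derivative_Omega_xxx\<close>)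
  have xy: "deriv (\<lambda>x. deriv (\<lambda>y. Om x y) y0) x = Omega_xy m px py x y0" if "x \<in> ?V" for x
    by (rule eqI[where F = "\<lambda>x. Omega_y m px py x y0"])
      (use that in \<open>auto simp: y1 intro: has_real_derivative_Omega_xy\<close>)
  have xxy: "deriv (deriv (\<lambda>x. deriv (\<lambda>y. Om x y) y0)) x = Omega_xxy m px py x y0" if "x \<in> ?V" for x
    by (rule eqI[where F = "\<lambda>x. Omega_xy m px py x y0"])
      (use that in \<open>auto simp: xy intro: has_real_derivative_Omega_xxy\<close>)
  have xyy: "deriv (\<lambda>x. deriv (deriv (\<lambda>y. Om x y)) y0) x = Omega_xyy m px py x y0" if "x \<in> ?V" for x
    by (rule eqI[where F = "\<lambda>x. Omega_yy m px py x y0"])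
      (use that in \<open>auto simp: y2 intro: has_real_derivative_Omega_xyy\<close>)
  have "x0 \<in> ?V" using assms(1) by simp
  from x1[OF this] y1[OF this] x2[OF this] xy[OF this] y2[OF this] x3[OF this] xxy[OF this]
      xyy[OF this] y3[OF this]
  show "pd 1 0 Om x0 y0 = Omega_x m px py x0 y0" "pd 0 1 Om x0 y0 = Omega_y m px py x0 y0"
    "pd 2 0 Om x0 y0 = Omega_xx m px py x0 y0" "pd 1 1 Om x0 y0 = Omega_xy m px py x0 y0"
    "pd 0 2 Om x0 y0 = Omega_yy m px py x0 y0" "pd 3 0 Om x0 y0 = Omega_xxx m px py x0 y0"
    "pd 2 1 Om x0 y0 = Omega_xxy m px py x0 y0" "pd 1 2 Om x0 y0 = Omega_xyy m px py x0 y0"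
    "pd 0 3 Om x0 y0 = Omega_yyy m px py x0 y0"
    by (simp_all add: pd_def eval_nat_numeral)
qed

lemma inv_dist_coeff_values:
  fixes a b :: real
  defines "S \<equiv> 1 / sqrt (a^2 + b^2)"
  shows "inv_dist_coeff 1 0 a b (a^2 + b^2) = - (a * S^3)"
    "inv_dist_coeff 0 1 a b (a^2 + b^2) = - (b * S^3)"
    "2 * inv_dist_coeff 2 0 a b (a^2 + b^2) = - (S^3 - 3 * a^2 * S^5)"
    "inv_dist_coeff 1 1 a b (a^2 + b^2) = 3 * b * a * S^5"
    "2 * inv_dist_coeff 0 2 a b (a^2 + b^2) = - (S^3 - 3 * b^2 * S^5)"
    "6 * inv_dist_coeff 3 0 a b (a^2 + b^2) = 9 * a * S^5 - 15 * a^3 * S^7"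
    "2 * inv_dist_coeff 2 1 a b (a^2 + b^2) = 3 * b * (S^5 - 5 * a^2 * S^7)"
    "2 * inv_dist_coeff 1 2 a b (a^2 + b^2) = 3 * a * S^5 - 15 * b^2 * a * S^7"
    "6 * inv_dist_coeff 0 3 a b (a^2 + b^2) = 9 * b * S^5 - 15 * b^3 * S^7"
proof -
  have inv_sq: "1 / (a^2 + b^2) = S^2" by (simp add: S_def power_divide)
  have binom1: "inv_sqrt_binom (numeral num.One) = -1/2" using inv_sqrt_binom_values(2) by simp
  show "inv_dist_coeff 1 0 a b (a^2 + b^2) = - (a * S^3)"
    "inv_dist_coeff 0 1 a b (a^2 + b^2) = - (b * S^3)"
    "2 * inv_dist_coeff 2 0 a b (a^2 + b^2) = - (S^3 - 3 * a^2 * S^5)"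
    "inv_dist_coeff 1 1 a b (a^2 + b^2) = 3 * b * a * S^5"
    "2 * inv_dist_coeff 0 2 a b (a^2 + b^2) = - (S^3 - 3 * b^2 * S^5)"
    "6 * inv_dist_coeff 3 0 a b (a^2 + b^2) = 9 * a * S^5 - 15 * a^3 * S^7"
    "2 * inv_dist_coeff 2 1 a b (a^2 + b^2) = 3 * b * (S^5 - 5 * a^2 * S^7)"
    "2 * inv_dist_coeff 1 2 a b (a^2 + b^2) = 3 * a * S^5 - 15 * b^2 * a * S^7"
    "6 * inv_dist_coeff 0 3 a b (a^2 + b^2) = 9 * b * S^5 - 15 * b^3 * S^7"
    unfolding inv_dist_coeff_def Let_def inv_sq S_def[symmetric]
    by (simp_all only: inv_sqrt_binom_values binom1 if_True if_False simp_thms zero_neq_one one_neq_zero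
        zero_neq_numeral numeral_eq_iff one_eq_numeral_iff numeral_eq_one_iff semiring_norm) (algebra+)
qed

lemma add_weighted_sum_scaled:
  fixes m F G :: "nat \<Rightarrow> real"
  assumes "a = c * b" "\<And>j. j \<in> J \<Longrightarrow> c * G j = F j"
  shows "a + (\<Sum>j\<in>J. m j * F j) = c * (b + (\<Sum>j\<in>J. m j * G j))"
proof -
  have "(\<Sum>j\<in>J. m j * F j) = c * (\<Sum>j\<in>J. m j * G j)"
    by (simp add: sum_distrib_left assms(2)[symmetric] mult.left_commute cong: sum.cong)
  then show ?thesis using assms(1) by (simp add: distrib_left)
qed

lemma pd_Omega_eq_omega_coeff:
  fixes m px py :: "nat \<Rightarrow> real"
  assumes "off_primaries px py x0 y0"
  defines "Om \<equiv> Omega m px py" and "w \<equiv> omega_coeff m px py x0 y0"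
  shows "pd 1 0 Om x0 y0 = w 1 0" "pd 0 1 Om x0 y0 = w 0 1"
    "pd 2 0 Om x0 y0 = 2 * w 2 0" "pd 1 1 Om x0 y0 = w 1 1" "pd 0 2 Om x0 y0 = 2 * w 0 2"
    "pd 3 0 Om x0 y0 = 6 * w 3 0" "pd 2 1 Om x0 y0 = 2 * w 2 1"
    "pd 1 2 Om x0 y0 = 2 * w 1 2" "pd 0 3 Om x0 y0 = 6 * w 0 3"
proof -
  note pd = pd_Omega[OF assms(1), of m, folded Om_def]
  note simps = centrifugal_coeff_def inv_dist_pow_def inv_dist_coeff_values[unfolded One_nat_def]
  have w: "w i k = centrifugal_coeff x0 y0 i k + (\<Sum>j\<in>{1,2,3}. m j *
      inv_dist_coeff i k (x0 - px j) (y0 - py j) ((x0 - px j)^2 + (y0 - py j)^2))" for i k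
    by (simp add: w_def omega_coeff_def)
  have minus: "a - (\<Sum>j\<in>J. m j * f j) = a + (\<Sum>j\<in>J. m j * - f j)" for a :: real and J f
    by (simp add: sum_negf)
  note scaled = add_weighted_sum_scaled
  note scaled1 = add_weighted_sum_scaled[where c = 1, unfolded mult_1]
  note scaled0 = add_weighted_sum_scaled[where a = 0, unfolded add_0_left]
  show "pd 1 0 Om x0 y0 = w 1 0"
    unfolding pd Omega_x_def w minus by (rule scaled1) (simp_all add: simps)
  show "pd 0 1 Om x0 y0 = w 0 1"
    unfolding pd Omega_y_def w minus by (rule scaled1) (simp_all add: simps)
  show "pd 2 0 Om x0 y0 = 2 * w 2 0"
    unfolding pd Omega_xx_def w minus by (rule scaled) (simp_all add: simps)
  show "pd 1 1 Om x0 y0 = w 1 1"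
    unfolding pd Omega_xy_def w
      by (rule scaled0[where c = 1, unfolded mult_1]) (simp_all add: simps)
  show "pd 0 2 Om x0 y0 = 2 * w 0 2"
    unfolding pd Omega_yy_def w minus by (rule scaled) (simp_all add: simps)
  show "pd 3 0 Om x0 y0 = 6 * w 3 0"
    unfolding pd Omega_xxx_def w by (rule scaled0) (simp_all add: simps)
  show "pd 2 1 Om x0 y0 = 2 * w 2 1"
    unfolding pd Omega_xxy_def w by (rule scaled0) (simp_all add: simps)
  show "pd 1 2 Om x0 y0 = 2 * w 1 2"
    unfolding pd Omega_xyy_def w by (rule scaled0) (simp_all add: simps)
  show "pd 0 3 Om x0 y0 = 6 * w 0 3"
    unfolding pd Omega_yyy_def w by (rule scaled0) (simp_all add: simps)
qed

subsection \<open>The curve \<open>t \<mapsto> K(h(t))\<close>\<close>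

lemma K_of_h_nth: "K_of_h K c $ k $$ n
    = (\<Sum>i\<le>n. \<Sum>j\<le>n. K i j $ k * (Abs_fps c ^ i * fps_X ^ (3*j)) $$ n)"
  by (simp add: K_of_h_def fps_sum_nth mult.assoc)

lemma vanishes_to_2_Abs_fps: fixes c :: "nat \<Rightarrow> real"
  shows "c 0 = 0 \<Longrightarrow> c 1 = 0 \<Longrightarrow> vanishes_to 2 (Abs_fps c)"
  by (auto simp: vanishes_to_def less_2_cases_iff)

lemma vanishes_to_curve_monomial:
  "vanishes_to 2 x \<Longrightarrow> vanishes_to (2 * i + 3 * j) (x ^ i * fps_X ^ (3 * j) :: real fps)"
  using vanishes_to_mult[OF vanishes_to_power vanishes_to_X_power, of 2 x i "3 * j"]
    by (simp add: mult.commute)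

lemma curve_monomial_low_nth:
  fixes c :: "nat \<Rightarrow> real"
  assumes c: "c 0 = 0" "c 1 = 0" and n: "n < 4"
  shows "(Abs_fps c ^ i * fps_X^(3*j)) $$ n = (if i = 0 \<and> j = 0 then (if n = 0 then 1 else 0)
     else if i = 1 \<and> j = 0 then c n else if i = 0 \<and> j = 1 then (if n = 3 then 1 else 0) else 0)"
proof -
  have x: "vanishes_to 2 (Abs_fps c)" using c by (rule vanishes_to_2_Abs_fps)
  consider "i = 0 \<and> j = 0" | "i = 1 \<and> j = 0" | "i = 0 \<and> j = 1" | "2*i + 3*j \<ge> 4" by linarith
  then show ?thesis
  proof cases
    case 4
    then have h1: "\<not> (i = 0 \<and> j = 0)" and h2: "\<not> (i = 1 \<and> j = 0)" and h3: "\<not> (i = 0 \<and> j = 1)"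
      by auto
    have h4: "(Abs_fps c ^ i * fps_X^(3*j)) $$ n = 0"
      using vanishes_to_curve_monomial[OF x, of i j] 4 n by (simp add: vanishes_to_def)
    show ?thesis by (simp only: h4 if_not_P[OF h1] if_not_P[OF h2] if_not_P[OF h3])
  qed (auto simp: fps_X_power_nth)
qed

lemma K_of_h_low_nth:
  fixes c :: "nat \<Rightarrow> real"
  assumes c: "c 0 = 0" "c 1 = 0" and n: "n < 4"
  shows "K_of_h K c $ k $$ n = K 1 0 $ k * c n + K 0 1 $ k * (if n = 3 then 1 else 0)
      + K 0 0 $ k * (if n = 0 then 1 else 0)"
proof -
  have "K_of_h K c $ k $$ n
      = (\<Sum>i\<le>n. \<Sum>j\<le>n. K i j $ k * (if i = 0 \<and> j = 0 then (if n = 0 then 1 else 0)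
     else if i = 1 \<and> j = 0 then c n else if i = 0 \<and> j = 1 then (if n = 3 then 1 else 0) else 0))"
    unfolding K_of_h_nth by (simp add: curve_monomial_low_nth[OF c n])
  also have "\<dots> = K 1 0 $ k * c n + K 0 1 $ k * (if n = 3 then 1 else 0)
      + K 0 0 $ k * (if n = 0 then 1 else 0)"
  proof -
    have "n = 0 \<or> n = 1 \<or> n = 2 \<or> n = 3" using n by linarith
    then show ?thesis using c by (elim disjE) (simp_all add: numeral_eq_Suc atMost_Suc)
  qed
  finally show ?thesis .
qed

lemma double_sum_delta: "(\<Sum>i\<le>n. \<Sum>j\<le>(n::nat). (if i = a \<and> j = b then g i j else (0::real)))
    = (if a \<le> n \<and> b \<le> n then g a b else 0)"
proof -
  have "(\<Sum>j\<le>n. (if i = a \<and> j = b then g i j else 0)) = (if i = a \<and> b \<le> n then g i b else 0)" for i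
    by (cases "i = a") (simp_all add: sum.delta')
  then show ?thesis by (cases "b \<le> n") (simp_all add: sum.delta')
qed

lemma curve_monomial_diff_nth:
  fixes c c' :: "nat \<Rightarrow> real"
  assumes c: "c 0 = 0" "c 1 = 0" "c' 0 = 0" "c' 1 = 0" and agree: "\<And>i. i < N \<Longrightarrow> c' i = c i"
    and N: "2 \<le> N" and n: "n < N + 2"
  shows "(Abs_fps c' ^ i * fps_X ^ (3 * j)) $$ n - (Abs_fps c ^ i * fps_X ^ (3 * j)) $$ n
    = (if i = 1 \<and> j = 0 then c' n - c n else 0)"
proof -
  consider "i = 0" | "i = 1 \<and> j = 0" | "i \<noteq> 0" "\<not> (i = 1 \<and> j = 0)" by blast
  then show ?thesis
  proof cases
    case 3
    have "perturbation 2 N (Abs_fps c) (Abs_fps c')"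
      using c agree by (simp add: perturbation_def vanishes_to_2_Abs_fps) (simp add: vanishes_to_def)
    then have "perturbation (i * 2) ((i - 1) * 2 + N) (Abs_fps c ^ i) (Abs_fps c' ^ i)"
      using 3 N by (intro perturbation_power) auto
    then have "vanishes_to ((i - 1) * 2 + N + 3 * j) ((Abs_fps c' ^ i - Abs_fps c ^ i) * fps_X ^ (3 * j))"
      by (intro vanishes_to_mult vanishes_to_X_power) (simp add: perturbation_def)
    moreover have "n < (i - 1) * 2 + N + 3 * j" using 3 n by (cases i) auto
    ultimately show ?thesis using 3 by (auto simp: vanishes_to_def algebra_simps)
  qed simp_all
qed

lemma K_of_h_diff_nth:
  fixes c c' :: "nat \<Rightarrow> real"
  assumes c: "c 0 = 0" "c 1 = 0" "c' 0 = 0" "c' 1 = 0" and agree: "\<And>i. i < N \<Longrightarrow> c' i = c i"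
    and N: "2 \<le> N" and n: "n < N + 2"
  shows "K_of_h K c' $ k $$ n - K_of_h K c $ k $$ n = K 1 0 $ k * (c' n - c n)"
proof -
  have "K_of_h K c' $ k $$ n - K_of_h K c $ k $$ n = (\<Sum>i\<le>n. \<Sum>j\<le>n. K i j $ k *
      ((Abs_fps c' ^ i * fps_X ^ (3 * j)) $$ n - (Abs_fps c ^ i * fps_X ^ (3 * j)) $$ n))"
    unfolding K_of_h_nth by (simp add: sum_subtractf[symmetric] right_diff_distrib)
  also have "\<dots> = (\<Sum>i\<le>n. \<Sum>j\<le>n. (if i = 1 \<and> j = 0 then K i j $ k * (c' n - c n) else 0))"
    by (intro sum.cong refl) (simp add: curve_monomial_diff_nth[OF c agree N n])
  also have "\<dots> = (if 1 \<le> n \<and> 0 \<le> n then K 1 0 $ k * (c' n - c n) else 0)"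
    by (rule double_sum_delta)
  also have "\<dots> = K 1 0 $ k * (c' n - c n)" using c by (cases n) auto
  finally show ?thesis .
qed

context
  fixes K :: "nat \<Rightarrow> nat \<Rightarrow> real^4"
  assumes K0: "K 0 0 = 0" and K10: "K 1 0 = vector [1, 0, 0, 0]"
    and K01: "K 0 1 = vector [0, 1, 0, 0]"
begin

lemma K_linear_nth: "K 1 0 $ 1 = 1" "K 1 0 $ 2 = 0" "K 1 0 $ 3 = 0" "K 1 0 $ 4 = 0"
  "K 0 1 $ 1 = 0" "K 0 1 $ 2 = 1" "K 0 1 $ 3 = 0" "K 0 1 $ 4 = 0" "K 0 0 $ k = 0"
  by (simp_all only: K10 K01 K0) (simp_all add: vector_def)

lemmas K_linear_nth_One = K_linear_nth[unfolded One_nat_def]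

lemma leading_term_K_of_h:
  assumes "c 0 = 0" "c 1 = 0"
  shows "leading_term 2 (c 2) (K_of_h K c $ 1)" "leading_term 3 1 (K_of_h K c $ 2)"
    "leading_term 3 0 (K_of_h K c $ 3)" "leading_term 3 0 (K_of_h K c $ 4)"
  using assms unfolding leading_term_def vanishes_to_def
  by (auto simp: K_of_h_low_nth K_linear_nth K_linear_nth_One less_2_cases_iff)

lemma K_of_h_nth_0: "c 0 = 0 \<Longrightarrow> c 1 = 0 \<Longrightarrow> K_of_h K c $ k $$ 0 = 0"
  by (simp add: K_of_h_low_nth K_linear_nth K_linear_nth_One)

lemma leading_term_K_of_h_1_diff:
  assumes c: "c 0 = 0" "c 1 = 0" "c' 0 = 0" "c' 1 = 0" and agree: "\<And>i. i < N \<Longrightarrow> c' i = c i"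
    and N: "2 \<le> N"
  shows "leading_term N (c' N - c N) (K_of_h K c' $ 1 - K_of_h K c $ 1)"
  unfolding leading_term_def vanishes_to_def using K_of_h_diff_nth[OF c agree N, of _ K 1] agree
    by (auto simp: K_linear_nth K_linear_nth_One)

lemma leading_term_K_of_h_diff:
  assumes c: "c 0 = 0" "c 1 = 0" "c' 0 = 0" "c' 1 = 0" and agree: "\<And>i. i < N \<Longrightarrow> c' i = c i"
    and N: "2 \<le> N"
    and k: "k \<noteq> 1"
  shows "leading_term (Suc N) 0 (K_of_h K c' $ k - K_of_h K c $ k)"
proof -
  have "K 1 0 $ k = 0" using k exhaust_4[of k] by (auto simp: K_linear_nth K_linear_nth_One)
  then show ?thesis unfolding leading_term_0_iff vanishes_to_def
    using K_of_h_diff_nth[OF c agree N, of _ K k] by auto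
qed

end

subsection \<open>Leading terms of the energy along the curve\<close>

definition cubic_part :: "(nat \<Rightarrow> nat \<Rightarrow> real) \<Rightarrow> real fps \<Rightarrow> real fps \<Rightarrow> real fps" where
  "cubic_part w p q = fps_const (w 3 0) * p^3 + fps_const (w 2 1) * (p^2 * q)
      + fps_const (w 1 2) * (p * q^2) + fps_const (w 0 3) * q^3"

definition cubic_form :: "(nat \<Rightarrow> nat \<Rightarrow> real) \<Rightarrow> real \<Rightarrow> real \<Rightarrow> real" where
  "cubic_form w u v = w 3 0 * u^3 + w 2 1 * (u^2 * v) + w 1 2 * (u * v^2) + w 0 3 * v^3"

lemma taylor3_critical:
  assumes "w 1 0 = 0" "w 0 1 = 0"
  shows "taylor3 w p q = fps_const (w 2 0) * p^2 + fps_const (w 1 1) * (p * q)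
      + fps_const (w 0 2) * q^2 + cubic_part w p q"
  using assms by (simp add: taylor3_def cubic_part_def)

lemma taylor3_quadratic_rank_one:
  fixes w :: "nat \<Rightarrow> nat \<Rightarrow> real" and a b d :: real
  assumes "w 2 0 = a/2" "w 1 1 = b" "w 0 2 = d/2" "a * d = b^2" "d \<noteq> 0"
  shows "fps_const (w 2 0) * p^2 + fps_const (w 1 1) * (p * q) + fps_const (w 0 2) * q^2
       = fps_const (1/(2*d)) * (fps_const b * p + fps_const d * q)^2"
proof -
  have e1: "w 2 0 = 1/(2*d) * b^2" using assms by (simp add: field_simps power2_eq_square)
  have e2: "w 1 1 = 1/(2*d) * (2 * b * d)" using assms by (simp add: field_simps)
  have e3: "w 0 2 = 1/(2*d) * d^2" using assms by (simp add: field_simps power2_eq_square)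
  show ?thesis unfolding e1 e2 e3 by (simp only: fps_const_arith) algebra
qed

lemma leading_term_cubic_part:
  assumes p: "leading_term 2 u p" and q: "leading_term 2 v q"
  shows "leading_term 6 (cubic_form w u v) (cubic_part w p q)"
proof -
  have "leading_term 6 (w 3 0 * u^3) (fps_const (w 3 0) * p^3)"
    by (rule leading_term_subst[OF leading_term_cmult[OF leading_term_power[OF p, of 3]]]) simp_all
  moreover have "leading_term 6 (w 2 1 * (u^2 * v)) (fps_const (w 2 1) * (p^2 * q))"
    by (rule leading_term_subst[OF leading_term_cmult[OF
          leading_term_mult[OF leading_term_power[OF p, of 2] q]]]) simp_all
  moreover have "leading_term 6 (w 1 2 * (u * v^2)) (fps_const (w 1 2) * (p * q^2))"
    by (rule leading_term_subst[OF leading_term_cmult[OF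
          leading_term_mult[OF p leading_term_power[OF q, of 2]]]]) simp_all
  moreover have "leading_term 6 (w 0 3 * v^3) (fps_const (w 0 3) * q^3)"
    by (rule leading_term_subst[OF leading_term_cmult[OF leading_term_power[OF q, of 3]]]) simp_all
  ultimately show ?thesis unfolding cubic_part_def cubic_form_def by (intro leading_term_add)
qed

lemma leading_term_cube_difference_quotient:
  fixes p p' :: "real fps"
  assumes "leading_term 2 u p" "leading_term 2 u p'"
  shows "leading_term 4 (3 * u^2) (p'^2 + p' * p + p^2)"
proof -
  have "leading_term 4 (u^2 + u * u + u^2) (p'^2 + p' * p + p^2)"
    by (intro leading_term_add leading_term_subst[OF leading_term_power[OF assms(2), of 2]]
        leading_term_subst[OF leading_term_power[OF assms(1), of 2]]
        leading_term_subst[OF leading_term_mult[OF assms(2,1)]]) simp_all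
  then show ?thesis by (rule leading_term_subst) (simp_all add: power2_eq_square)
qed

text \<open>The leading coefficient is the derivative of \<open>cubic_form w\<close> at \<open>(u, v)\<close> in the
  direction \<open>(e, f)\<close>.\<close>
lemma leading_term_cubic_part_diff:
  assumes p: "leading_term 2 u p" and p': "leading_term 2 u p'"
    and q: "leading_term 2 v q" and q': "leading_term 2 v q'"
    and dp: "leading_term N e (p' - p)" and dq: "leading_term N f (q' - q)"
  shows "leading_term (N + 4) (w 3 0 * (e * (3 * u^2)) + w 2 1 * (e * (2 * u) * v + u^2 * f)
      + w 1 2 * (e * v^2 + u * (f * (2 * v))) + w 0 3 * (f * (3 * v^2)))
    (cubic_part w p' q' - cubic_part w p q)"
proof -
  have id: "cubic_part w p' q' - cubic_part w p q =
      fps_const (w 3 0) * ((p' - p) * (p'^2 + p' * p + p^2))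
    + fps_const (w 2 1) * ((p' - p) * (p' + p) * q' + p^2 * (q' - q))
    + fps_const (w 1 2) * ((p' - p) * q'^2 + p * ((q' - q) * (q' + q)))
    + fps_const (w 0 3) * ((q' - q) * (q'^2 + q' * q + q^2))"
    unfolding cubic_part_def by algebra
  have pp: "leading_term 2 (2 * u) (p' + p)" using leading_term_add[OF p' p]
    by (rule leading_term_subst) simp_all
  have qq: "leading_term 2 (2 * v) (q' + q)" using leading_term_add[OF q' q]
    by (rule leading_term_subst) simp_all
  have a1: "leading_term (N + 4) (e * (3 * u^2)) ((p' - p) * (p'^2 + p' * p + p^2))"
    by (rule leading_term_mult[OF dp leading_term_cube_difference_quotient[OF p p']])
  have a2: "leading_term (N + 4) (e * (2 * u) * v + u^2 * f)
      ((p' - p) * (p' + p) * q' + p^2 * (q' - q))"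
    by (intro leading_term_add leading_term_subst[OF leading_term_mult[OF leading_term_mult[OF dp pp] q']]
        leading_term_subst[OF leading_term_mult[OF leading_term_power[OF p, of 2] dq]]) simp_all
  have a3: "leading_term (N + 4) (e * v^2 + u * (f * (2 * v)))
      ((p' - p) * q'^2 + p * ((q' - q) * (q' + q)))"
    by (intro leading_term_add leading_term_subst[OF leading_term_mult[OF dp leading_term_power[OF q', of 2]]]
        leading_term_subst[OF leading_term_mult[OF p leading_term_mult[OF dq qq]]]) simp_all
  have a4: "leading_term (N + 4) (f * (3 * v^2)) ((q' - q) * (q'^2 + q' * q + q^2))"
    by (rule leading_term_mult[OF dq leading_term_cube_difference_quotient[OF q q']])
  show ?thesis unfolding id by (intro leading_term_add leading_term_cmult a1 a2 a3 a4)
qed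

locale critical_libration =
  fixes m px py :: "nat \<Rightarrow> real" and x0 y0 a b d :: real
  assumes off: "\<And>j. j \<in> {1,2,3} \<Longrightarrow> (x0 - px j)^2 + (y0 - py j)^2 > 0"
    and crit: "omega_coeff m px py x0 y0 1 0 = 0" "omega_coeff m px py x0 y0 0 1 = 0"
    and hess: "omega_coeff m px py x0 y0 2 0 = a/2" "omega_coeff m px py x0 y0 1 1 = b"
      "omega_coeff m px py x0 y0 0 2 = d/2" "a * d = b^2" "d \<noteq> 0"
begin

abbreviation "w \<equiv> omega_coeff m px py x0 y0"

text \<open>At a critical libration point the quadratic part of \<open>\<Omega>\<close> is the square of the linear
  form \<open>b p\<^sub>1 + d p\<^sub>3\<close>, because the Hessian has rank one.\<close>
lemma jacobi_fps_critical:
  assumes "P1 $$ 0 = 0" "P3 $$ 0 = 0"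
  shows "jacobi_fps m px py x0 y0 P1 P2 P3 P4 = fps_const (jacobi_Lc m px py x0 y0) -
    (P2^2 + P4^2)
      + 2 * (fps_const (1/(2*d)) * (fps_const b * P1 + fps_const d * P3)^2 + cubic_part w P1 P3)
    + 2 * omega_remainder m px py x0 y0 P1 P3"
proof -
  have "jacobi_fps m px py x0 y0 P1 P2 P3 P4 = fps_const (jacobi_Lc m px py x0 y0) - (P2^2 + P4^2)
      + 2 * taylor3 w P1 P3 + 2 * omega_remainder m px py x0 y0 P1 P3"
    by (rule jacobi_fps_taylor3) (use assms off in auto)
  then show ?thesis
    unfolding taylor3_critical[OF crit] taylor3_quadratic_rank_one[OF hess]
      by (simp add: algebra_simps)
qed

lemma leading_term_jacobi_fps:
  assumes P1: "leading_term 2 (d * c2) P1" and P3: "leading_term 2 (- b * c2) P3"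
    and P2: "leading_term 3 d P2" and P4: "leading_term 3 (- b) P4"
    and l: "leading_term 3 (2 * d) (fps_const b * P1 + fps_const d * P3)"
  shows "leading_term 6 (4 * d - d^2 - b^2 + 2 * cubic_form w (d * c2) (- b * c2))
     (jacobi_fps m px py x0 y0 P1 P2 P3 P4 - fps_const (jacobi_Lc m px py x0 y0))"
proof -
  have v1: "vanishes_to 2 P1" and v3: "vanishes_to 2 P3"
    using P1 P3 by (simp_all add: leading_term_def)
  then have "P1 $$ 0 = 0" "P3 $$ 0 = 0" by (simp_all add: vanishes_to_def)
  then have dec: "jacobi_fps m px py x0 y0 P1 P2 P3 P4 - fps_const (jacobi_Lc m px py x0 y0) =
      - (P2^2 + P4^2)
        + 2 * (fps_const (1/(2*d)) * (fps_const b * P1 + fps_const d * P3)^2 + cubic_part w P1 P3)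
      + 2 * omega_remainder m px py x0 y0 P1 P3"
    by (simp add: jacobi_fps_critical)
  have t1: "leading_term 6 (d^2 + b^2) (P2^2 + P4^2)"
    by (intro leading_term_add leading_term_subst[OF leading_term_power[OF P2, of 2]]
        leading_term_subst[OF leading_term_power[OF P4, of 2]]) simp_all
  have t2: "leading_term 6 (1/(2*d) * (2*d)^2)
      (fps_const (1/(2*d)) * (fps_const b * P1 + fps_const d * P3)^2)"
    by (intro leading_term_cmult leading_term_subst[OF leading_term_power[OF l, of 2]]) simp_all
  have t3: "leading_term 6 (cubic_form w (d * c2) (- b * c2)) (cubic_part w P1 P3)"
    by (rule leading_term_cubic_part[OF P1 P3])
  have t4: "leading_term 6 0 (omega_remainder m px py x0 y0 P1 P3)"
    using vanishes_to_omega_remainder[OF v1 v3] by (rule leading_term_0I) simp_all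
  from leading_term_add[OF leading_term_add[OF leading_term_uminus[OF t1] leading_term_double[OF
      leading_term_add[OF t2 t3]]] leading_term_double[OF t4]]
  show ?thesis unfolding dec
    by (rule leading_term_subst) (use hess(5) in \<open>simp_all add: power2_eq_square\<close>)
qed

lemma leading_term_jacobi_fps_diff:
  assumes P1: "leading_term 2 (d * c2) P1" and P3: "leading_term 2 (- b * c2) P3"
    and P2: "leading_term 3 d P2" and P4: "leading_term 3 (- b) P4"
    and Q1: "leading_term 2 (d * c2) Q1" and Q3: "leading_term 2 (- b * c2) Q3"
    and Q2: "leading_term 3 d Q2" and Q4: "leading_term 3 (- b) Q4"
    and lP: "leading_term 3 (2 * d) (fps_const b * P1 + fps_const d * P3)"
    and lQ: "leading_term 3 (2 * d) (fps_const b * Q1 + fps_const d * Q3)"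
    and d1: "leading_term N e (Q1 - P1)" and d3: "leading_term N f (Q3 - P3)"
    and d2: "leading_term (Suc N) 0 (Q2 - P2)" and d4: "leading_term (Suc N) 0 (Q4 - P4)"
    and dl: "leading_term (Suc N) 0
        ((fps_const b * Q1 + fps_const d * Q3) - (fps_const b * P1 + fps_const d * P3))"
    and N: "3 \<le> N"
  shows "leading_term (N + 4) (2 * (w 3 0 * (e * (3 * (d * c2)^2))
      + w 2 1 * (e * (2 * (d * c2)) * (- b * c2) + (d * c2)^2 * f)
      + w 1 2 * (e * (- b * c2)^2 + (d * c2) * (f * (2 * (- b * c2))))
        + w 0 3 * (f * (3 * (- b * c2)^2))))
     (jacobi_fps m px py x0 y0 Q1 Q2 Q3 Q4 - jacobi_fps m px py x0 y0 P1 P2 P3 P4)"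
proof -
  have v: "vanishes_to 2 P1" "vanishes_to 2 P3" "vanishes_to 2 Q1" "vanishes_to 2 Q3"
    using P1 P3 Q1 Q3 by (simp_all add: leading_term_def)
  then have "P1 $$ 0 = 0" "P3 $$ 0 = 0" "Q1 $$ 0 = 0" "Q3 $$ 0 = 0"
    by (simp_all add: vanishes_to_def)
  note decP = jacobi_fps_critical[OF this(1,2), of P2 P4]
    and decQ = jacobi_fps_critical[OF this(3,4), of Q2 Q4]
  define l where "l = fps_const b * P1 + fps_const d * P3"
  define l' where "l' = fps_const b * Q1 + fps_const d * Q3"
  have diff: "jacobi_fps m px py x0 y0 Q1 Q2 Q3 Q4 - jacobi_fps m px py x0 y0 P1 P2 P3 P4
     = - ((Q2 - P2) * (Q2 + P2) + (Q4 - P4) * (Q4 + P4))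
       + 2 * (fps_const (1/(2*d)) * ((l' - l) * (l' + l))
           + (cubic_part w Q1 Q3 - cubic_part w P1 P3))
       + 2 * (omega_remainder m px py x0 y0 Q1 Q3 - omega_remainder m px py x0 y0 P1 P3)"
    unfolding decP decQ l_def l'_def by (simp add: algebra_simps power2_eq_square)
  have "perturbation 2 N P1 Q1" "perturbation 2 N P3 Q3"
    using v d1 d3 by (simp_all add: perturbation_def leading_term_def)
  from omega_remainder_perturbation[OF this]
  have t4: "leading_term (N + 4) 0
      (omega_remainder m px py x0 y0 Q1 Q3 - omega_remainder m px py x0 y0 P1 P3)"
    using N by (intro leading_term_0I[where m = "3 * 2 + N"]) auto
  have P2s: "leading_term 3 (2 * d) (Q2 + P2)" using leading_term_add[OF Q2 P2]
    by (rule leading_term_subst) simp_all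
  have P4s: "leading_term 3 (2 * - b) (Q4 + P4)" using leading_term_add[OF Q4 P4]
    by (rule leading_term_subst) simp_all
  have ls: "leading_term 3 (2 * (2 * d)) (l' + l)"
    unfolding l_def l'_def using leading_term_add[OF lQ lP] by (rule leading_term_subst) simp_all
  have t1: "leading_term (N + 4) 0 ((Q2 - P2) * (Q2 + P2) + (Q4 - P4) * (Q4 + P4))"
    by (intro
        leading_term_subst[OF leading_term_add[OF leading_term_mult[OF d2 P2s]
            leading_term_mult[OF d4 P4s]]]) simp_all
  have t2: "leading_term (N + 4) 0 (fps_const (1/(2*d)) * ((l' - l) * (l' + l)))"
    using leading_term_cmult[OF leading_term_mult[OF dl[folded l_def l'_def] ls], of "1/(2*d)"]
    by (rule leading_term_subst) simp_all
  note t3 = leading_term_cubic_part_diff[OF P1 Q1 P3 Q3 d1 d3, of w]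
  from leading_term_add[OF leading_term_add[OF leading_term_uminus[OF t1] leading_term_double[OF
      leading_term_add[OF t2 t3]]] leading_term_double[OF t4]]
  show ?thesis unfolding diff by (rule leading_term_subst) simp_all
qed

end

subsection \<open>Solving for the curve coefficient by coefficient\<close>

lemma diagonal_of_stabilizing_sequence:
  assumes "\<And>n i. i < n + k \<Longrightarrow> S (Suc n) i = S n i" "0 < k" "i < n + k"
  shows "S i i = S n i"
proof -
  have stable: "S m i = S n i" if "n \<le> m" "i < n + k" for n m i
    using that(1) by (induction m rule: dec_induct) (use assms(1) that(2) in auto)
  show ?thesis
  proof (cases "i \<le> n")
    case True then show ?thesis using stable[of i n i] assms(2) by simp
  next
    case False then show ?thesis using stable[of n i i] assms(3) by simp
  qed
qed

text \<open>Changing the coefficient \<open>c\<^sub>N\<close> (\<open>N \<ge> 3\<close>) shifts the \<open>t\<^sup>N\<^sup>+\<^sup>4\<close> coefficient of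
  \<open>Psi c\<close> by \<open>L\<close> times the change and leaves the lower ones alone, so \<open>c\<^sub>N\<close> is chosen
  to kill that coefficient.\<close>
lemma fps_root_by_successive_correction:
  fixes Psi :: "(nat \<Rightarrow> real) \<Rightarrow> real fps" and E0 \<gamma> L :: real
  assumes L: "L \<noteq> 0"
    and low: "\<And>c. c 0 = 0 \<Longrightarrow> c 1 = 0 \<Longrightarrow> c 2 = \<gamma> \<Longrightarrow> vanishes_to 7 (Psi c - fps_const E0)"
    and step: "\<And>c c' N. c 0 = 0 \<Longrightarrow> c 1 = 0 \<Longrightarrow> c 2 = \<gamma> \<Longrightarrow> c' 0 = 0 \<Longrightarrow> c' 1 = 0 \<Longrightarrow>
       (\<And>i. i < N \<Longrightarrow> c' i = c i) \<Longrightarrow> 3 \<le> N \<Longrightarrow>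
       leading_term (N + 4) (L * (c' N - c N)) (Psi c' - Psi c)"
  shows "\<exists>c. c 0 = 0 \<and> c 1 = 0 \<and> Psi c = fps_const E0"
proof -
  define S where "S = rec_nat (\<lambda>i. if i = 2 then \<gamma> else 0)
    (\<lambda>n c. c(n + 3 := c (n + 3) - Psi c $$ (n + 7) / L))"
  have S_Suc: "S (Suc n) = (S n)(n + 3 := S n (n + 3) - Psi (S n) $$ (n + 7) / L)" for n
    by (simp add: S_def)
  have S_low: "S n 0 = 0" "S n 1 = 0" "S n 2 = \<gamma>" for n
    by (induction n) (simp_all add: S_def)
  define c where "c i = S i i" for i
  have c_eq: "c i = S n i" if "i < n + 3" for i n
    unfolding c_def by (rule diagonal_of_stabilizing_sequence[OF _ _ that]) (simp_all add: S_Suc)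
  have c_low: "c 0 = 0" "c 1 = 0" "c 2 = \<gamma>"
    using c_eq[of 0 0] c_eq[of 1 0] c_eq[of 2 0] by (simp_all add: S_def)
  have S_root: "Psi (S (Suc n)) $$ (n + 7) = 0" for n
  proof -
    have "leading_term (n + 3 + 4) (L * (S (Suc n) (n + 3) - S n (n + 3))) (Psi (S (Suc n)) - Psi (S n))"
      by (rule step) (simp_all add: S_low S_low[unfolded One_nat_def] S_Suc)
    then have "(Psi (S (Suc n)) - Psi (S n)) $$ (n + 7) = L * (S (Suc n) (n + 3) - S n (n + 3))"
      by (simp add: leading_term_def add.assoc)
    then show ?thesis using L by (simp add: S_Suc)
  qed
  have "(Psi c - fps_const E0) $$ k = 0" for k
  proof (cases "k < 7")
    case True then show ?thesis using low[OF c_low] by (simp add: vanishes_to_def)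
  next
    case False
    then obtain n where k: "k = n + 7" by (metis add.commute le_Suc_ex not_less)
    have "leading_term (n + 4 + 4) (L * (c (n + 4) - S (Suc n) (n + 4))) (Psi c - Psi (S (Suc n)))"
      by (rule step) (simp_all add: c_low S_low S_low[unfolded One_nat_def] c_eq)
    then have "Psi c $$ k = Psi (S (Suc n)) $$ k"
      by (simp add: leading_term_def vanishes_to_def k)
    then show ?thesis using S_root[of n] k by simp
  qed
  then show ?thesis using c_low by (auto simp: fps_eq_iff)
qed

lemma fps_mat_vec_4:
  fixes C :: "real^4^4" and Z :: "real fps^4"
  shows "fps_mat_vec C Z i = fps_const (C$i$1) * Z$1 + fps_const (C$i$2) * Z$2
      + fps_const (C$i$3) * Z$3 + fps_const (C$i$4) * Z$4"
  by (simp add: fps_mat_vec_def sum_4)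

lemma leading_term_lincomb:
  "leading_term k a1 z1 \<Longrightarrow> leading_term k a2 z2 \<Longrightarrow> leading_term k a3 z3 \<Longrightarrow> leading_term k a4 z4 \<Longrightarrow>
   leading_term k (c1*a1 + c2*a2 + c3*a3 + c4*a4)
     (fps_const c1 * z1 + fps_const c2 * z2 + fps_const c3 * z3 + fps_const c4 * z4)"
  for z1 z2 z3 z4 :: "real fps"
  by (intro leading_term_add leading_term_cmult)

lemma leading_term_lincomb_0:
  "c1 = 0 \<Longrightarrow> leading_term k a2 z2 \<Longrightarrow> leading_term k a3 z3 \<Longrightarrow> leading_term k a4 z4 \<Longrightarrow>
   leading_term k (c2*a2 + c3*a3 + c4*a4)
     (fps_const c1 * z1 + fps_const c2 * z2 + fps_const c3 * z3 + fps_const c4 * z4)"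
  for z1 z2 z3 z4 :: "real fps"
  using leading_term_add[OF leading_term_add[OF leading_term_cmult[of k a2 z2 c2]
      leading_term_cmult[of k a3 z3 c3]] leading_term_cmult[of k a4 z4 c4]]
  by (simp add: add.assoc)

lemma lincomb_diff:
  fixes y1 y2 y3 y4 z1 z2 z3 z4 :: "real fps"
  shows "(fps_const c1 * y1 + fps_const c2 * y2 + fps_const c3 * y3 + fps_const c4 * y4)
   - (fps_const c1 * z1 + fps_const c2 * z2 + fps_const c3 * z3 + fps_const c4 * z4)
   = fps_const c1 * (y1 - z1) + fps_const c2 * (y2 - z2) + fps_const c3 * (y3 - z3)
     + fps_const c4 * (y4 - z4)"
  by (simp add: algebra_simps)

lemma lincomb_combine:
  fixes z1 z2 z3 z4 :: "real fps"
  shows "fps_const b * (fps_const c1 * z1 + fps_const c2 * z2 + fps_const c3 * z3 + fps_const c4 * z4)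
   + fps_const d * (fps_const e1 * z1 + fps_const e2 * z2 + fps_const e3 * z3 + fps_const e4 * z4)
   = fps_const (b*c1 + d*e1) * z1 + fps_const (b*c2 + d*e2) * z2 + fps_const (b*c3 + d*e3) * z3
     + fps_const (b*c4 + d*e4) * z4"
  by (simp only: fps_const_arith) algebra

locale libration_curve = critical_libration +
  fixes K :: "nat \<Rightarrow> nat \<Rightarrow> real^4" and C :: "real^4^4"
  assumes K_linear: "K 0 0 = 0" "K 1 0 = vector [1, 0, 0, 0]" "K 0 1 = vector [0, 1, 0, 0]"
    and C_columns: "C$1$1 = d" "C$2$1 = 0" "C$3$1 = - b" "C$4$1 = 0"
      "C$1$2 = b" "C$2$2 = d" "C$3$2 = 2 - a" "C$4$2 = - b"
    and trace: "a + d > 4"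
    and nondegenerate: "cubic_form w d (- b) \<noteq> 0"
begin

definition coords :: "(nat \<Rightarrow> real) \<Rightarrow> 4 \<Rightarrow> real fps" where
  "coords c = fps_mat_vec C (K_of_h K c)"

definition energy :: "(nat \<Rightarrow> real) \<Rightarrow> real fps" where
  "energy c = jacobi_fps m px py x0 y0 (coords c 1) (coords c 2) (coords c 3) (coords c 4)"

text \<open>The \<open>t\<^sup>2\<close> terms of \<open>b P\<^sub>1 + d P\<^sub>3\<close> cancel since the first column of \<open>C\<close> is
  \<open>(d, 0, -b, 0)\<close>.\<close>
lemma leading_term_coords:
  assumes c: "c 0 = 0" "c 1 = 0"
  shows "leading_term 2 (d * c 2) (coords c 1)" "leading_term 2 (- b * c 2) (coords c 3)"
    "leading_term 3 d (coords c 2)" "leading_term 3 (- b) (coords c 4)"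
    "leading_term 3 (2 * d) (fps_const b * coords c 1 + fps_const d * coords c 3)"
proof -
  note Z = leading_term_K_of_h[OF K_linear c]
  have Z2: "leading_term 2 0 (K_of_h K c $ 2)" "leading_term 2 0 (K_of_h K c $ 3)"
    "leading_term 2 0 (K_of_h K c $ 4)"
    using Z(2-4) by (auto intro!: leading_term_0I[OF leading_term_vanishes_to])
  show "leading_term 2 (d * c 2) (coords c 1)" "leading_term 2 (- b * c 2) (coords c 3)"
    using leading_term_lincomb[OF Z(1) Z2, of "C$1$1" "C$1$2" "C$1$3" "C$1$4"]
      leading_term_lincomb[OF Z(1) Z2, of "C$3$1" "C$3$2" "C$3$3" "C$3$4"]
    by (simp_all add: coords_def fps_mat_vec_4 C_columns)
  show "leading_term 3 d (coords c 2)" "leading_term 3 (- b) (coords c 4)"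
    using leading_term_lincomb_0[OF C_columns(2) Z(2-4)] leading_term_lincomb_0[OF C_columns(4) Z(2-4)]
    by (simp_all add: coords_def fps_mat_vec_4 C_columns)
  have "b * C$1$1 + d * C$3$1 = 0" "b * C$1$2 + d * C$3$2 = 2 * d"
    using hess(4) by (simp_all add: C_columns algebra_simps power2_eq_square)
  from leading_term_lincomb_0[OF this(1) Z(2-4)] this(2)
  show "leading_term 3 (2 * d) (fps_const b * coords c 1 + fps_const d * coords c 3)"
    by (simp add: coords_def fps_mat_vec_4 lincomb_combine)
qed

lemma leading_term_coords_diff:
  assumes c: "c 0 = 0" "c 1 = 0" "c' 0 = 0" "c' 1 = 0" and agree: "\<And>i. i < N \<Longrightarrow> c' i = c i"
    and N: "2 \<le> N"
  shows "leading_term N (d * (c' N - c N)) (coords c' 1 - coords c 1)"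
    "leading_term N (- b * (c' N - c N)) (coords c' 3 - coords c 3)"
    "leading_term (Suc N) 0 (coords c' 2 - coords c 2)" "leading_term (Suc N) 0 (coords c' 4 - coords c 4)"
    "leading_term (Suc N) 0 ((fps_const b * coords c' 1 + fps_const d * coords c' 3)
       - (fps_const b * coords c 1 + fps_const d * coords c 3))"
proof -
  note Z1 = leading_term_K_of_h_1_diff[OF K_linear c agree N]
  have Zk: "leading_term (Suc N) 0 (K_of_h K c' $ 2 - K_of_h K c $ 2)"
    "leading_term (Suc N) 0 (K_of_h K c' $ 3 - K_of_h K c $ 3)"
    "leading_term (Suc N) 0 (K_of_h K c' $ 4 - K_of_h K c $ 4)"
    by (auto intro: leading_term_K_of_h_diff[OF K_linear c agree N])
  have ZkN: "leading_term N 0 (K_of_h K c' $ 2 - K_of_h K c $ 2)"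
    "leading_term N 0 (K_of_h K c' $ 3 - K_of_h K c $ 3)"
    "leading_term N 0 (K_of_h K c' $ 4 - K_of_h K c $ 4)"
    using Zk by (auto intro!: leading_term_0I[OF leading_term_vanishes_to])
  show "leading_term N (d * (c' N - c N)) (coords c' 1 - coords c 1)"
    "leading_term N (- b * (c' N - c N)) (coords c' 3 - coords c 3)"
    using leading_term_lincomb[OF Z1 ZkN, of "C$1$1" "C$1$2" "C$1$3" "C$1$4"]
      leading_term_lincomb[OF Z1 ZkN, of "C$3$1" "C$3$2" "C$3$3" "C$3$4"]
    by (simp_all add: coords_def fps_mat_vec_4 lincomb_diff C_columns)
  show "leading_term (Suc N) 0 (coords c' 2 - coords c 2)" "leading_term (Suc N) 0 (coords c' 4 - coords c 4)"
    using leading_term_lincomb_0[OF C_columns(2) Zk] leading_term_lincomb_0[OF C_columns(4) Zk]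
    by (simp_all add: coords_def fps_mat_vec_4 lincomb_diff)
  have "b * C$1$1 + d * C$3$1 = 0" by (simp add: C_columns)
  from leading_term_lincomb_0[OF this Zk]
  show "leading_term (Suc N) 0 ((fps_const b * coords c' 1 + fps_const d * coords c' 3)
       - (fps_const b * coords c 1 + fps_const d * coords c 3))"
    by (simp add: coords_def fps_mat_vec_4 lincomb_combine lincomb_diff)
qed

lemma leading_term_energy:
  assumes "c 0 = 0" "c 1 = 0"
  shows "leading_term 6 (4 * d - d^2 - b^2 + 2 * c 2 ^ 3 * cubic_form w d (- b))
    (energy c - fps_const (jacobi_Lc m px py x0 y0))"
  using leading_term_jacobi_fps[OF leading_term_coords[OF assms]] unfolding energy_def
  by (rule leading_term_subst)
    (simp_all add: cubic_form_def algebra_simps power3_eq_cube power2_eq_square)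

lemma leading_term_energy_diff:
  assumes "c 0 = 0" "c 1 = 0" "c' 0 = 0" "c' 1 = 0" "\<And>i. i < N \<Longrightarrow> c' i = c i" "3 \<le> N"
  shows "leading_term (N + 4) (6 * c 2 ^ 2 * cubic_form w d (- b) * (c' N - c N)) (energy c' - energy c)"
proof -
  have c2: "c' 2 = c 2" using assms(5,6) by simp
  have N: "2 \<le> N" using assms(6) by simp
  note P = leading_term_coords[OF assms(1,2)]
  note Q = leading_term_coords[OF assms(3,4), unfolded c2]
  note diff = leading_term_coords_diff[OF assms(1-4) assms(5) N]
  from leading_term_jacobi_fps_diff[OF P(1-4) Q(1-4) P(5) Q(5) diff assms(6)]
  show ?thesis unfolding energy_def
    by (rule leading_term_subst)
      (simp_all add: cubic_form_def algebra_simps power2_eq_square power3_eq_cube)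
qed

lemma exists_curve_on_energy_level:
  "\<exists>c. c 0 = 0 \<and> c 1 = 0 \<and> energy c = fps_const (jacobi_Lc m px py x0 y0)"
proof -
  define \<alpha> where "\<alpha> = 4 * d - d^2 - b^2"
  define \<beta> where "\<beta> = cubic_form w d (- b)"
  have "\<alpha> = d * (4 - a - d)" using hess(4) by (simp add: \<alpha>_def algebra_simps power2_eq_square)
  then have \<alpha>: "\<alpha> \<noteq> 0" using hess(5) trace by simp
  have \<beta>: "\<beta> \<noteq> 0" using nondegenerate by (simp add: \<beta>_def)
  define c2 where "c2 = root 3 (- \<alpha> / (2 * \<beta>))"
  have c2: "\<alpha> + 2 * c2 ^ 3 * \<beta> = 0" using \<beta> by (simp add: c2_def odd_real_root_pow)
  then have "c2 \<noteq> 0" using \<alpha> by auto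
  show ?thesis
  proof (rule fps_root_by_successive_correction[where \<gamma> = c2 and L = "6 * c2^2 * \<beta>"])
    show "6 * c2^2 * \<beta> \<noteq> 0" using \<open>c2 \<noteq> 0\<close> \<beta> by simp
    show "vanishes_to 7 (energy c - fps_const (jacobi_Lc m px py x0 y0))"
      if "c 0 = 0" "c 1 = 0" "c 2 = c2" for c
      using leading_term_energy[OF that(1,2)] c2 that(3)
      by (simp add: leading_term_0_iff flip: \<alpha>_def \<beta>_def)
    show "leading_term (N + 4) (6 * c2^2 * \<beta> * (c' N - c N)) (energy c' - energy c)"
      if "c 0 = 0" "c 1 = 0" "c 2 = c2" "c' 0 = 0" "c' 1 = 0" "\<And>i. i < N \<Longrightarrow> c' i = c i" "3 \<le> N"
      for c c' N
      using leading_term_energy_diff[OF that(1,2,4-7)] that(3) by (simp add: \<beta>_def)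
  qed
qed

end

lemma Cmat_columns:
  "Cmat Om x0 y0 $1$1 = pd 0 2 Om x0 y0" "Cmat Om x0 y0 $2$1 = 0" "Cmat Om x0 y0 $3$1 =
      - pd 1 1 Om x0 y0"
  "Cmat Om x0 y0 $4$1 = 0" "Cmat Om x0 y0 $1$2 = pd 1 1 Om x0 y0" "Cmat Om x0 y0 $2$2
      = pd 0 2 Om x0 y0"
  "Cmat Om x0 y0 $3$2 = 2 - pd 2 0 Om x0 y0" "Cmat Om x0 y0 $4$2 = - pd 1 1 Om x0 y0"
  by (simp_all add: Cmat_def Let_def transpose_def vector_def)

lemma libration_curveI:
  fixes m px py :: "nat \<Rightarrow> real"
  defines "Om \<equiv> Omega m px py"
  assumes off: "\<And>j. j \<in> {1,2,3} \<Longrightarrow> (x0 - px j)^2 + (y0 - py j)^2 > 0"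
    and crit: "pd 1 0 Om x0 y0 = 0" "pd 0 1 Om x0 y0 = 0"
      "pd 2 0 Om x0 y0 * pd 0 2 Om x0 y0 = (pd 1 1 Om x0 y0)^2"
    and Oyy: "pd 0 2 Om x0 y0 \<noteq> 0" and trace: "pd 2 0 Om x0 y0 + pd 0 2 Om x0 y0 > 4"
    and K: "K 0 0 = 0" "K 1 0 = vector [1, 0, 0, 0]" "K 0 1 = vector [0, 1, 0, 0]"
    and nondeg: "pd 3 0 Om x0 y0 * (pd 0 2 Om x0 y0)^3
        - 3 * pd 2 1 Om x0 y0 * (pd 0 2 Om x0 y0)^2 * pd 1 1 Om x0 y0
        + 3 * pd 1 2 Om x0 y0 * pd 0 2 Om x0 y0 * (pd 1 1 Om x0 y0)^2
        - pd 0 3 Om x0 y0 * (pd 1 1 Om x0 y0)^3 \<noteq> 0"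
  shows "libration_curve m px py x0 y0 (pd 2 0 Om x0 y0) (pd 1 1 Om x0 y0) (pd 0 2 Om x0 y0) K
      (Cmat Om x0 y0)"
proof -
  define w where "w = omega_coeff m px py x0 y0"
  have "off_primaries px py x0 y0" using off by (simp add: off_primaries_def)
  note pd = pd_Omega_eq_omega_coeff[OF this, of m, folded Om_def w_def]
  have "w 1 0 = 0" "w 0 1 = 0" using crit(1,2) pd(1,2) by simp_all
  moreover have "w 2 0 = pd 2 0 Om x0 y0 / 2" "w 1 1 = pd 1 1 Om x0 y0"
      "w 0 2 = pd 0 2 Om x0 y0 / 2"
    using pd(3-5) by simp_all
  moreover have "6 * cubic_form w (pd 0 2 Om x0 y0) (- pd 1 1 Om x0 y0) =
      pd 3 0 Om x0 y0 * (pd 0 2 Om x0 y0)^3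
      - 3 * pd 2 1 Om x0 y0 * (pd 0 2 Om x0 y0)^2 * pd 1 1 Om x0 y0
      + 3 * pd 1 2 Om x0 y0 * pd 0 2 Om x0 y0 * (pd 1 1 Om x0 y0)^2
      - pd 0 3 Om x0 y0 * (pd 1 1 Om x0 y0)^3"
    unfolding pd(6-9) cubic_form_def by algebra
  ultimately show ?thesis
    unfolding w_def using off crit(3) Oyy trace K nondeg
    by unfold_locales (simp_all add: Cmat_columns)
qed

theorem lemma2:
  fixes m px py :: "nat \<Rightarrow> real" and x0 y0 :: real
    and K :: "nat \<Rightarrow> nat \<Rightarrow> real^4" and r1 r2 :: "nat \<Rightarrow> nat \<Rightarrow> real"
  defines "Om \<equiv> Omega m px py"
  assumes masses: "m 1 + m 2 + m 3 = 1" "0 < m 3" "m 3 \<le> m 2" "m 2 \<le> m 1"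
    and not_primary: "\<And>j. j \<in> {1,2,3} \<Longrightarrow> (x0, y0) \<noteq> (px j, py j)"
    and crit: "pd 1 0 Om x0 y0 = 0" "pd 0 1 Om x0 y0 = 0"
      "pd 2 0 Om x0 y0 * pd 0 2 Om x0 y0 = (pd 1 1 Om x0 y0)\<^sup>2"
    and Oyy: "pd 0 2 Om x0 y0 \<noteq> 0"
    and trace: "pd 2 0 Om x0 y0 + pd 0 2 Om x0 y0 > 4"
    and K0: "K 0 0 = 0" and K10: "K 1 0 = vector [1, 0, 0, 0]" and K01: "K 0 1 = vector [0, 1, 0, 0]"
    and r_low: "r1 0 0 = 0" "r1 1 0 = 0" "r1 0 1 = 1" "\<And>i j. i + j < 2 \<Longrightarrow> r2 i j = 0"
    and invariance: "\<And>i j. DKr K r1 r2 i j = comp2 (Fvf Om x0 y0) K i j"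
    and nondeg: "pd 3 0 Om x0 y0 * (pd 0 2 Om x0 y0)^3
        - 3 * pd 2 1 Om x0 y0 * (pd 0 2 Om x0 y0)^2 * pd 1 1 Om x0 y0
        + 3 * pd 1 2 Om x0 y0 * pd 0 2 Om x0 y0 * (pd 1 1 Om x0 y0)^2
        - pd 0 3 Om x0 y0 * (pd 1 1 Om x0 y0)^3 \<noteq> 0"
  shows "\<exists>c :: nat \<Rightarrow> real. c 0 = 0 \<and> c 1 = 0 \<and>
    comp1 (Ecal Om x0 y0) (K_of_h K c) - fps_const (Ecal Om x0 y0 0) = 0"
proof -
  have off: "(x0 - px j)^2 + (y0 - py j)^2 > 0" if "j \<in> {1,2,3}" for j
    using not_primary[OF that] by (auto simp: sum_power2_gt_zero_iff)
  interpret libration_curve m px py x0 y0 "pd 2 0 Om x0 y0" "pd 1 1 Om x0 y0" "pd 0 2 Om x0 y0"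
    K "Cmat Om x0 y0"
    unfolding Om_def by (rule libration_curveI)
      (use off crit Oyy trace K0 K10 K01 nondeg in \<open>simp_all add: Om_def\<close>)
  obtain c where c: "c 0 = 0" "c 1 = 0" "energy c = fps_const (jacobi_Lc m px py x0 y0)"
    using exists_curve_on_energy_level by blast
  have "comp1 (Ecal Om x0 y0) (K_of_h K c) = energy c"
    unfolding energy_def coords_def unfolding Ecal_def Om_def
    by (rule comp1_jacobi_eq_jacobi_fps[OF K_of_h_nth_0[OF K0 K10 K01 c(1,2)] off])
  moreover have "Ecal Om x0 y0 0 = jacobi_Lc m px py x0 y0"
    by (simp add: Ecal_def jacobi_def Lc_nth Om_def Omega_def jacobi_Lc_def)
  ultimately show ?thesis using c by auto
qed

end
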